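(* Let $m\in\mathbb{N}$ and let $V(x)=\sum_{k\in\mathbb{Z}}\widehat{V}(2k)e^{i2k\pi x}$ be a 1-periodic complex-valued distribution belonging to $H_{+}^{-m}$. Then each of the operators $S_{\pm}(V)$ is well defined on the Hilbert space $L_{2}(0,1)$ as an $m$-sectorial operator, namely as the form-sum $S_{\pm}(V)=D_{\pm}^{2m}\dotplus V(x)$. Here $S_{\pm}(V)$ is the operator associated (via the first representation theorem) with the sesquilinear form $$t_{\pm}[u,v]:=\langle D_{\pm}^{2m}u,v\rangle_{\pm}+\langle V(x)u,v\rangle_{\pm},\qquad \mathrm{Dom}(t_{\pm})=H_{\pm}^{m},$$ and this form is densely defined, closed and sectorial on $L_2(0,1)$. Moreover $$\mathrm{Dom}(S_{\pm})=\{u\in H_{\pm}^{m}\mid D_{\pm}^{2m}u+V(x)u\in L_{2}(0,1)\},\qquad S_{\pm}(V)u=D_{\pm}^{2m}u+V(x)u,\quad u\in\mathrm{Dom}(S_{\pm}).$$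
   Context: For $s\in\mathbb{R}$, $H_{+}^{s}$ is the space of formal series $f=\sum_{k\in\mathbb{Z}}\widehat f(2k)e^{i2k\pi x}$ (1-periodic functions/distributions on $[0,1]$) with $\|f\|_{H_+^s}^2=\sum_k\langle 2k\rangle^{2s}|\widehat f(2k)|^2<\infty$, and $H_{-}^{s}$ is the space of formal series $f=\sum_{k}\widehat f(2k+1)e^{i(2k+1)\pi x}$ (1-semiperiodic, i.e. antiperiodic) with $\|f\|_{H_-^s}^2=\sum_k\langle 2k+1\rangle^{2s}|\widehat f(2k+1)|^2<\infty$, where $\langle k\rangle=1+|k|$; $H_\pm^0=L_2(0,1)$. $\langle\cdot,\cdot\rangle_{\pm}$ denotes the sesquilinear pairing between $H_\pm^{s}$ and $H_\pm^{-s}$ obtained by extending by continuity the $L_2(0,1)$ inner product $(f,g)=\int_0^1 f\overline g\,dx$. $D_{\pm}=-i\,d/dx$ with domain $H_\pm^1$, and $D_\pm^{2m}=|D_\pm|^{2m}$ (acting on Fourier coefficients as multiplication by $(n\pi)^{2m}$ on the mode $e^{in\pi x}$), with domain $H_\pm^{2m}$, extended to $H_\pm^{s}\to H_\pm^{s-2m}$. For $V\in H_+^{-m}$ and $u\in H_\pm^{m}$, $V(x)u$ denotes the formal product of Fourier series, $V(x)u=\sum_n\big(\sum_j\widehat V(n-j)\widehat u(j)\big)e^{in\pi x}$, which converges in $H_\pm^{-m}$. An operator $A$ on a Hilbert space is $m$-sectorial if its numerical range $\{(Au,u):u\in\mathrm{Dom}(A),\|u\|=1\}$ lies in a sector $\{\lambda:|\arg(\lambda-\gamma)|\le\theta\}$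 with $\gamma\in\mathbb{R}$, $0\le\theta<\pi/2$, and the exterior of this sector lies in the resolvent set of $A$. The form-sum $D_\pm^{2m}\dotplus V$ means the $m$-sectorial operator associated with the closed sectorial form $t_\pm$ in Kato's sense (i.e. $\mathrm{Dom}(S_\pm)\subseteq\mathrm{Dom}(t_\pm)$ and $t_\pm[u,v]=(S_\pm u,v)$ for $u\in\mathrm{Dom}(S_\pm)$, $v\in\mathrm{Dom}(t_\pm)$). *)

theory Defs
  imports "HOL-Analysis.Analysis"
begin

text \<open>Model: a 1-periodic (pos = True) resp. 1-semiperiodic (pos = False) function/distribution
  on [0,1] is represented by its Fourier coefficients c :: int => complex, where c n is the
  coefficient of exp(i n pi x). Periodic series only have even n, semiperiodic only odd n.
  Via the Fourier isomorphism (both families are orthonormal bases of L2(0,1)),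
  L2(0,1) is identified with the space hs pos 0.\<close>

definition wt :: "int \<Rightarrow> real" where
  "wt n = 1 + real_of_int \<bar>n\<bar>"

definition parity_ok :: "bool \<Rightarrow> (int \<Rightarrow> complex) \<Rightarrow> bool" where
  "parity_ok pos f \<longleftrightarrow> (\<forall>n. f n \<noteq> 0 \<longrightarrow> (even n \<longleftrightarrow> pos))"

definition hs :: "bool \<Rightarrow> real \<Rightarrow> (int \<Rightarrow> complex) set" where
  "hs pos s = {f. parity_ok pos f \<and>
      (\<lambda>n. wt n powr (2 * s) * (cmod (f n))\<^sup>2) summable_on UNIV}"

abbreviation L2 :: "bool \<Rightarrow> (int \<Rightarrow> complex) set" where
  "L2 pos \<equiv> hs pos 0"

definition pair :: "(int \<Rightarrow> complex) \<Rightarrow> (int \<Rightarrow> complex) \<Rightarrow> complex" where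
  "pair f g = (\<Sum>\<^sub>\<infinity>n. f n * cnj (g n))"

definition l2norm :: "(int \<Rightarrow> complex) \<Rightarrow> real" where
  "l2norm f = sqrt (\<Sum>\<^sub>\<infinity>n. (cmod (f n))\<^sup>2)"

definition Dpow :: "nat \<Rightarrow> (int \<Rightarrow> complex) \<Rightarrow> (int \<Rightarrow> complex)" where
  "Dpow m u = (\<lambda>n. complex_of_real ((real_of_int n * pi) ^ (2 * m)) * u n)"

definition mult :: "(int \<Rightarrow> complex) \<Rightarrow> (int \<Rightarrow> complex) \<Rightarrow> (int \<Rightarrow> complex)" where
  "mult V u = (\<lambda>n. \<Sum>\<^sub>\<infinity>j. V (n - j) * u j)"

definition Sexpr :: "nat \<Rightarrow> (int \<Rightarrow> complex) \<Rightarrow> (int \<Rightarrow> complex) \<Rightarrow> (int \<Rightarrow> complex)" where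
  "Sexpr m V u = (\<lambda>n. Dpow m u n + mult V u n)"

definition sector :: "real \<Rightarrow> real \<Rightarrow> complex set" where
  "sector \<gamma> \<theta> = {z. z = complex_of_real \<gamma> \<or> \<bar>Arg (z - complex_of_real \<gamma>)\<bar> \<le> \<theta>}"

definition densely_defined :: "bool \<Rightarrow> (int \<Rightarrow> complex) set \<Rightarrow> bool" where
  "densely_defined pos D \<longleftrightarrow> D \<subseteq> L2 pos \<and>
     (\<forall>f\<in>L2 pos. \<forall>\<epsilon>>0. \<exists>u\<in>D. l2norm (\<lambda>n. f n - u n) < \<epsilon>)"

definition sectorial_form :: "bool \<Rightarrow> (int \<Rightarrow> complex) set
    \<Rightarrow> ((int \<Rightarrow> complex) \<Rightarrow> (int \<Rightarrow> complex) \<Rightarrow> complex) \<Rightarrow> bool" where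
  "sectorial_form pos D t \<longleftrightarrow> D \<subseteq> L2 pos \<and>
     (\<exists>\<gamma> \<theta>. 0 \<le> \<theta> \<and> \<theta> < pi / 2 \<and>
        (\<forall>u\<in>D. l2norm u = 1 \<longrightarrow> t u u \<in> sector \<gamma> \<theta>))"

definition closed_form :: "bool \<Rightarrow> (int \<Rightarrow> complex) set
    \<Rightarrow> ((int \<Rightarrow> complex) \<Rightarrow> (int \<Rightarrow> complex) \<Rightarrow> complex) \<Rightarrow> bool" where
  "closed_form pos D t \<longleftrightarrow>
     (\<forall>X u. (\<forall>n. X n \<in> D) \<and> u \<in> L2 pos \<and> (\<lambda>n. l2norm (\<lambda>i. X n i - u i)) \<longlonglongrightarrow> 0 \<and>
        (\<forall>\<epsilon>>0. \<exists>N. \<forall>n\<ge>N. \<forall>k\<ge>N. cmod (t (\<lambda>i. X n i - X k i) (\<lambda>i. X n i - X k i)) < \<epsilon>)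
      \<longrightarrow> u \<in> D \<and> (\<lambda>n. t (\<lambda>i. X n i - u i) (\<lambda>i. X n i - u i)) \<longlonglongrightarrow> 0)"

definition assoc_op :: "bool \<Rightarrow> (int \<Rightarrow> complex) set
    \<Rightarrow> ((int \<Rightarrow> complex) \<Rightarrow> (int \<Rightarrow> complex) \<Rightarrow> complex)
    \<Rightarrow> (int \<Rightarrow> complex) set \<Rightarrow> ((int \<Rightarrow> complex) \<Rightarrow> (int \<Rightarrow> complex)) \<Rightarrow> bool" where
  "assoc_op pos D t Sdom S \<longleftrightarrow>
     Sdom = {u\<in>D. \<exists>w\<in>L2 pos. \<forall>v\<in>D. t u v = pair w v} \<and>
     (\<forall>u\<in>Sdom. S u \<in> L2 pos \<and> (\<forall>v\<in>D. t u v = pair (S u) v))"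

definition m_sectorial :: "bool \<Rightarrow> (int \<Rightarrow> complex) set
    \<Rightarrow> ((int \<Rightarrow> complex) \<Rightarrow> (int \<Rightarrow> complex)) \<Rightarrow> bool" where
  "m_sectorial pos Sdom S \<longleftrightarrow> Sdom \<subseteq> L2 pos \<and> (\<forall>u\<in>Sdom. S u \<in> L2 pos) \<and>
     (\<exists>\<gamma> \<theta>. 0 \<le> \<theta> \<and> \<theta> < pi / 2 \<and>
        (\<forall>u\<in>Sdom. l2norm u = 1 \<longrightarrow> pair (S u) u \<in> sector \<gamma> \<theta>) \<and>
        (\<forall>z. z \<notin> sector \<gamma> \<theta> \<longrightarrow>
           bij_betw (\<lambda>u. (\<lambda>n. S u n - z * u n)) Sdom (L2 pos) \<and>
           (\<exists>C. \<forall>u\<in>Sdom. l2norm u \<le> C * l2norm (\<lambda>n. S u n - z * u n))))"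

end

theory Submission
  imports Defs
begin

text \<open>
  For lam large the form \<open>t[u] + lam \<parallel>u\<parallel>^2\<close> is comparable to the
  energy \<open>E(u) = \<Sum> ((n\<pi>)^(2m) + lam) |u(n)|^2\<close>, which is an equivalent norm on \<open>H^m\<close>: splitting \<open>V\<close>
  into finitely many low modes and a tail that is small in \<open>H^(-m)\<close>, and using
  \<open>\<langle>k\<rangle>^m \<le> 2^m (\<langle>j\<rangle>^m + \<langle>k + j\<rangle>^m)\<close> together with the \<open>\<ell>^1\<close> bound \<open>\<Sum> |u(j)| \<le> \<surd>3 \<parallel>\<langle>j\<rangle>^m u\<parallel>\<close>
  (here \<open>m \<ge> 1\<close> is needed), one gets \<open>|\<langle>V u, v\<rangle>| \<le> E(u)^(1/2) E(v)^(1/2) / 4\<close>. This single estimate gives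
  the sector with vertex \<open>-lam\<close> and half-angle \<open>\<pi>/4\<close>, closedness, and, outside that sector,
  invertibility of \<open>S - z\<close>: the Birman-Schwinger operator \<open>|D^(2m) - z|^(-1/2) V |D^(2m) - z|^(-1/2)\<close>
  then has norm at most 1/2, so \<open>(S - z) u = f\<close> is solved by a contraction argument in \<open>\<ell>^2\<close>.
  The domain of the associated operator is read off by testing the form against single modes.
\<close>

section \<open>Infinite sums\<close>

lemma summable_on_finite_sums_bounded:
  fixes g :: "'a \<Rightarrow> real"
  assumes "\<And>n. 0 \<le> g n" "\<And>F. finite F \<Longrightarrow> sum g F \<le> B"
  shows "g summable_on UNIV" "infsum g UNIV \<le> B"
proof -
  show s: "g summable_on UNIV"
    by (rule nonneg_bdd_above_summable_on) (use assms in \<open>auto intro!: bdd_aboveI2\<close>)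
  show "infsum g UNIV \<le> B"
    by (rule infsum_le_finite_sums[OF s]) (use assms in auto)
qed

lemma finite_sum_le_infsum_UNIV:
  fixes g :: "'a \<Rightarrow> real"
  assumes "g summable_on UNIV" "\<And>n. 0 \<le> g n" "finite F"
  shows "sum g F \<le> infsum g UNIV"
  by (rule finite_sum_le_infsum) (use assms in auto)

lemma infsum_square_nonneg: "0 \<le> (\<Sum>\<^sub>\<infinity>n. ((h n)::real)^2)"
  by (rule infsum_nonneg) auto

lemma L2_set_le_sqrt_infsum:
  fixes h :: "'a \<Rightarrow> real"
  assumes "(\<lambda>n. (h n)^2) summable_on UNIV" "finite F"
  shows "L2_set h F \<le> sqrt (\<Sum>\<^sub>\<infinity>n. (h n)^2)"
  unfolding L2_set_def by (rule real_sqrt_le_mono, rule finite_sum_le_infsum_UNIV) (use assms in auto)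

lemma square_summable_triangle:
  fixes h h1 h2 :: "'a \<Rightarrow> real"
  assumes s1: "(\<lambda>n. (h1 n)^2) summable_on UNIV" and s2: "(\<lambda>n. (h2 n)^2) summable_on UNIV"
    and le: "\<And>n. \<bar>h n\<bar> \<le> \<bar>h1 n\<bar> + \<bar>h2 n\<bar>"
  shows "(\<lambda>n. (h n)^2) summable_on UNIV"
    "sqrt (\<Sum>\<^sub>\<infinity>n. (h n)^2) \<le> sqrt (\<Sum>\<^sub>\<infinity>n. (h1 n)^2) + sqrt (\<Sum>\<^sub>\<infinity>n. (h2 n)^2)"
proof -
  let ?B = "sqrt (\<Sum>\<^sub>\<infinity>n. (h1 n)^2) + sqrt (\<Sum>\<^sub>\<infinity>n. (h2 n)^2)"
  have fin: "sum (\<lambda>n. (h n)^2) F \<le> ?B^2" if "finite F" for F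
  proof -
    have "L2_set h F = L2_set (\<lambda>n. \<bar>h n\<bar>) F" by (simp add: L2_set_def)
    also have "\<dots> \<le> L2_set (\<lambda>n. \<bar>h1 n\<bar> + \<bar>h2 n\<bar>) F"
      by (rule L2_set_mono) (use le in auto)
    also have "\<dots> \<le> L2_set (\<lambda>n. \<bar>h1 n\<bar>) F + L2_set (\<lambda>n. \<bar>h2 n\<bar>) F"
      by (rule L2_set_triangle_ineq)
    also have "\<dots> = L2_set h1 F + L2_set h2 F" by (simp add: L2_set_def)
    also have "\<dots> \<le> ?B"
      using L2_set_le_sqrt_infsum[OF s1 that] L2_set_le_sqrt_infsum[OF s2 that] by linarith
    finally have "L2_set h F \<le> ?B" .
    hence "(L2_set h F)^2 \<le> ?B^2" by (rule power_mono) simp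
    thus ?thesis by (simp add: L2_set_def sum_nonneg)
  qed
  show "(\<lambda>n. (h n)^2) summable_on UNIV" by (rule summable_on_finite_sums_bounded(1)[OF _ fin]) auto
  have "(\<Sum>\<^sub>\<infinity>n. (h n)^2) \<le> ?B^2" by (rule summable_on_finite_sums_bounded(2)[OF _ fin]) auto
  hence "sqrt (\<Sum>\<^sub>\<infinity>n. (h n)^2) \<le> sqrt (?B^2)" by (rule real_sqrt_le_mono)
  also have "\<dots> = ?B" using infsum_square_nonneg[of h1] infsum_square_nonneg[of h2] by simp
  finally show "sqrt (\<Sum>\<^sub>\<infinity>n. (h n)^2) \<le> ?B" .
qed

lemma infsum_abs_mult_le_cauchy_schwarz:
  fixes h1 h2 :: "'a \<Rightarrow> real"
  assumes s1: "(\<lambda>n. (h1 n)^2) summable_on UNIV" and s2: "(\<lambda>n. (h2 n)^2) summable_on UNIV"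
  shows "(\<lambda>n. \<bar>h1 n\<bar> * \<bar>h2 n\<bar>) summable_on UNIV"
    "(\<Sum>\<^sub>\<infinity>n. \<bar>h1 n\<bar> * \<bar>h2 n\<bar>) \<le> sqrt (\<Sum>\<^sub>\<infinity>n. (h1 n)^2) * sqrt (\<Sum>\<^sub>\<infinity>n. (h2 n)^2)"
proof -
  let ?B = "sqrt (\<Sum>\<^sub>\<infinity>n. (h1 n)^2) * sqrt (\<Sum>\<^sub>\<infinity>n. (h2 n)^2)"
  have fin: "sum (\<lambda>n. \<bar>h1 n\<bar> * \<bar>h2 n\<bar>) F \<le> ?B" if "finite F" for F
  proof -
    have "sum (\<lambda>n. \<bar>h1 n\<bar> * \<bar>h2 n\<bar>) F \<le> L2_set h1 F * L2_set h2 F" by (rule L2_set_mult_ineq)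
    also have "\<dots> \<le> ?B"
      by (rule mult_mono) (use L2_set_le_sqrt_infsum[OF s1 that] L2_set_le_sqrt_infsum[OF s2 that]
          infsum_square_nonneg[of h1] in auto)
    finally show ?thesis .
  qed
  show "(\<lambda>n. \<bar>h1 n\<bar> * \<bar>h2 n\<bar>) summable_on UNIV"
    by (rule summable_on_finite_sums_bounded(1)[OF _ fin]) auto
  show "(\<Sum>\<^sub>\<infinity>n. \<bar>h1 n\<bar> * \<bar>h2 n\<bar>) \<le> ?B"
    by (rule summable_on_finite_sums_bounded(2)[OF _ fin]) auto
qed

lemma square_summable_comparison:
  fixes h h1 :: "'a \<Rightarrow> real"
  assumes s1: "(\<lambda>n. (h1 n)^2) summable_on UNIV" and le: "\<And>n. \<bar>h n\<bar> \<le> c * \<bar>h1 n\<bar>"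
  shows "(\<lambda>n. (h n)^2) summable_on UNIV" "(\<Sum>\<^sub>\<infinity>n. (h n)^2) \<le> c^2 * (\<Sum>\<^sub>\<infinity>n. (h1 n)^2)"
proof -
  have le2: "(h n)^2 \<le> c^2 * (h1 n)^2" for n
  proof -
    have "\<bar>h n\<bar>^2 \<le> (c * \<bar>h1 n\<bar>)^2" by (rule power_mono[OF le]) simp
    thus ?thesis by (simp add: power_mult_distrib)
  qed
  have s: "(\<lambda>n. c^2 * (h1 n)^2) summable_on UNIV" using s1 by (rule summable_on_cmult_right)
  show "(\<lambda>n. (h n)^2) summable_on UNIV"
    by (rule summable_on_comparison_test[OF s]) (use le2 in auto)
  hence "(\<Sum>\<^sub>\<infinity>n. (h n)^2) \<le> (\<Sum>\<^sub>\<infinity>n. c^2 * (h1 n)^2)"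
    by (rule infsum_mono[OF _ s]) (use le2 in auto)
  thus "(\<Sum>\<^sub>\<infinity>n. (h n)^2) \<le> c^2 * (\<Sum>\<^sub>\<infinity>n. (h1 n)^2)" by (simp add: infsum_cmult_right')
qed

lemma infsum_sum_finite:
  fixes f :: "'b \<Rightarrow> 'a \<Rightarrow> 'c::{topological_comm_monoid_add, t2_space}"
  assumes "finite N" "\<And>n. n \<in> N \<Longrightarrow> f n summable_on A"
  shows "(\<lambda>j. \<Sum>n\<in>N. f n j) summable_on A"
    "infsum (\<lambda>j. \<Sum>n\<in>N. f n j) A = (\<Sum>n\<in>N. infsum (f n) A)"
proof -
  have "(\<lambda>j. \<Sum>n\<in>N. f n j) summable_on A \<and> infsum (\<lambda>j. \<Sum>n\<in>N. f n j) A = (\<Sum>n\<in>N. infsum (f n) A)"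
    using assms
  proof (induction N rule: finite_induct)
    case (insert x F)
    then show ?case
      using summable_on_add[of "f x" A] infsum_add[of "f x" A] by simp
  qed simp
  thus "(\<lambda>j. \<Sum>n\<in>N. f n j) summable_on A" "infsum (\<lambda>j. \<Sum>n\<in>N. f n j) A = (\<Sum>n\<in>N. infsum (f n) A)"
    by auto
qed

lemma infsum_diff:
  fixes f g :: "'a \<Rightarrow> 'b::{topological_ab_group_add, t2_space}"
  assumes "f summable_on A" "g summable_on A"
  shows "infsum (\<lambda>x. f x - g x) A = infsum f A - infsum g A"
  using infsum_add[OF assms(1) iffD2[OF summable_on_uminus assms(2)]] infsum_uminus[of g A] by simp

lemma finite_support_summable_on:
  fixes f :: "'a \<Rightarrow> 'b::{comm_monoid_add, t2_space}"
  assumes "finite F" "\<And>x. x \<notin> F \<Longrightarrow> f x = 0"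
  shows "f summable_on UNIV" "infsum f UNIV = sum f F"
proof -
  have "f summable_on UNIV \<longleftrightarrow> f summable_on F" "infsum f UNIV = infsum f F"
    by (rule summable_on_cong_neutral infsum_cong_neutral; use assms in auto)+
  thus "f summable_on UNIV" "infsum f UNIV = sum f F" using assms(1) by simp_all
qed

lemma summable_on_tail_le:
  fixes g :: "'a \<Rightarrow> real"
  assumes g: "g summable_on UNIV" "\<And>x. 0 \<le> g x" and e: "0 < \<epsilon>"
  obtains F where "finite F" "\<And>T. finite T \<Longrightarrow> sum g (T - F) \<le> \<epsilon>"
proof -
  obtain F where F: "finite F" "dist (sum g F) (infsum g UNIV) \<le> \<epsilon>"
    using infsum_finite_approximation[OF g(1) e] by auto
  have "sum g (T - F) \<le> \<epsilon>" if T: "finite T" for T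
  proof -
    have "sum g (T - F) = sum g ((T - F) \<union> F) - sum g F"
      by (subst sum.union_disjoint) (use T F in auto)
    also have "\<dots> \<le> infsum g UNIV - sum g F"
      using finite_sum_le_infsum_UNIV[OF g, of "(T - F) \<union> F"] T F by simp
    also have "\<dots> \<le> \<epsilon>"
      using F(2) abs_ge_minus_self[of "sum g F - infsum g UNIV"] unfolding dist_real_def by linarith
    finally show ?thesis .
  qed
  with F(1) show ?thesis by (rule that)
qed

section \<open>Convolution sums over the integers\<close>

lemma L2_set_shift_le:
  fixes f :: "int \<Rightarrow> real"
  assumes "(\<lambda>n. (f n)^2) summable_on UNIV" "finite J"
  shows "L2_set (\<lambda>j. f (k + j)) J \<le> sqrt (\<Sum>\<^sub>\<infinity>n. (f n)^2)"
    "L2_set (\<lambda>j. f (k - j)) J \<le> sqrt (\<Sum>\<^sub>\<infinity>n. (f n)^2)"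
proof -
  have reindex: "L2_set (\<lambda>j. f (\<phi> j)) J = L2_set f (\<phi> ` J)" if "inj_on \<phi> J" for \<phi>
    unfolding L2_set_def using sum.reindex[OF that, of "\<lambda>x. (f x)^2"] by simp
  have "L2_set (\<lambda>j. f (k + j)) J = L2_set f ((\<lambda>j. k + j) ` J)"
    by (rule reindex) (auto simp: inj_on_def)
  thus "L2_set (\<lambda>j. f (k + j)) J \<le> sqrt (\<Sum>\<^sub>\<infinity>n. (f n)^2)"
    using L2_set_le_sqrt_infsum[OF assms(1)] assms(2) by simp
  have "L2_set (\<lambda>j. f (k - j)) J = L2_set f ((\<lambda>j. k - j) ` J)"
    by (rule reindex) (auto simp: inj_on_def)
  thus "L2_set (\<lambda>j. f (k - j)) J \<le> sqrt (\<Sum>\<^sub>\<infinity>n. (f n)^2)"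
    using L2_set_le_sqrt_infsum[OF assms(1)] assms(2) by simp
qed

lemma sum_shifted_products_le:
  fixes X Y :: "int \<Rightarrow> real"
  assumes "\<And>n. 0 \<le> X n" "\<And>n. 0 \<le> Y n"
    "(\<lambda>n. (X n)^2) summable_on UNIV" "(\<lambda>n. (Y n)^2) summable_on UNIV" "finite J"
  shows "(\<Sum>j\<in>J. X j * Y (k + j)) \<le> sqrt (\<Sum>\<^sub>\<infinity>n. (X n)^2) * sqrt (\<Sum>\<^sub>\<infinity>n. (Y n)^2)"
    "(\<Sum>j\<in>J. Y (k - j) * X j) \<le> sqrt (\<Sum>\<^sub>\<infinity>n. (Y n)^2) * sqrt (\<Sum>\<^sub>\<infinity>n. (X n)^2)"
proof -
  note bounds = L2_set_le_sqrt_infsum[OF assms(3,5)] L2_set_shift_le[OF assms(4,5)]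
    infsum_square_nonneg[of X] infsum_square_nonneg[of Y]
  have "(\<Sum>j\<in>J. X j * Y (k + j)) = (\<Sum>j\<in>J. \<bar>X j\<bar> * \<bar>Y (k + j)\<bar>)" using assms(1,2) by simp
  also have "\<dots> \<le> L2_set X J * L2_set (\<lambda>j. Y (k + j)) J" by (rule L2_set_mult_ineq)
  also have "\<dots> \<le> sqrt (\<Sum>\<^sub>\<infinity>n. (X n)^2) * sqrt (\<Sum>\<^sub>\<infinity>n. (Y n)^2)"
    by (rule mult_mono) (use bounds in auto)
  finally show "(\<Sum>j\<in>J. X j * Y (k + j)) \<le> sqrt (\<Sum>\<^sub>\<infinity>n. (X n)^2) * sqrt (\<Sum>\<^sub>\<infinity>n. (Y n)^2)" .
  have "(\<Sum>j\<in>J. Y (k - j) * X j) = (\<Sum>j\<in>J. \<bar>Y (k - j)\<bar> * \<bar>X j\<bar>)" using assms(1,2) by simp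
  also have "\<dots> \<le> L2_set (\<lambda>j. Y (k - j)) J * L2_set X J" by (rule L2_set_mult_ineq)
  also have "\<dots> \<le> sqrt (\<Sum>\<^sub>\<infinity>n. (Y n)^2) * sqrt (\<Sum>\<^sub>\<infinity>n. (X n)^2)"
    by (rule mult_mono) (use bounds in auto)
  finally show "(\<Sum>j\<in>J. Y (k - j) * X j) \<le> sqrt (\<Sum>\<^sub>\<infinity>n. (Y n)^2) * sqrt (\<Sum>\<^sub>\<infinity>n. (X n)^2)" .
qed

lemma trilinear_sum_le_l1_second:
  fixes w X Y :: "int \<Rightarrow> real"
  assumes "\<And>n. 0 \<le> w n" "\<And>n. 0 \<le> X n" "\<And>n. 0 \<le> Y n"
    "(\<lambda>n. (w n)^2) summable_on UNIV" "(\<lambda>n. (Y n)^2) summable_on UNIV" "finite K" "finite J"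
  shows "(\<Sum>k\<in>K. \<Sum>j\<in>J. w k * X j * Y (k + j))
     \<le> (\<Sum>j\<in>J. X j) * (sqrt (\<Sum>\<^sub>\<infinity>n. (w n)^2) * sqrt (\<Sum>\<^sub>\<infinity>n. (Y n)^2))"
proof -
  have "(\<Sum>k\<in>K. \<Sum>j\<in>J. w k * X j * Y (k + j)) = (\<Sum>j\<in>J. X j * (\<Sum>k\<in>K. w k * Y (j + k)))"
    by (subst sum.swap) (simp add: sum_distrib_left algebra_simps)
  also have "\<dots> \<le> (\<Sum>j\<in>J. X j * (sqrt (\<Sum>\<^sub>\<infinity>n. (w n)^2) * sqrt (\<Sum>\<^sub>\<infinity>n. (Y n)^2)))"
    by (rule sum_mono, rule mult_left_mono)
      (use sum_shifted_products_le(1)[OF assms(1,3,4,5,6)] assms(2) in auto)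
  also have "\<dots> = (\<Sum>j\<in>J. X j) * (sqrt (\<Sum>\<^sub>\<infinity>n. (w n)^2) * sqrt (\<Sum>\<^sub>\<infinity>n. (Y n)^2))"
    by (simp add: sum_distrib_right)
  finally show ?thesis .
qed

lemma trilinear_sum_le_l1_third:
  fixes w X Y :: "int \<Rightarrow> real"
  assumes "\<And>n. 0 \<le> w n" "\<And>n. 0 \<le> X n" "\<And>n. 0 \<le> Y n"
    "(\<lambda>n. (w n)^2) summable_on UNIV" "(\<lambda>n. (X n)^2) summable_on UNIV" "finite K" "finite J"
  shows "(\<Sum>k\<in>K. \<Sum>j\<in>J. w k * X j * Y (k + j))
     \<le> (\<Sum>l\<in>(\<lambda>(k,j). k + j) ` (K \<times> J). Y l) * (sqrt (\<Sum>\<^sub>\<infinity>n. (w n)^2) * sqrt (\<Sum>\<^sub>\<infinity>n. (X n)^2))"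
proof -
  let ?L = "(\<lambda>(k,j). k + j) ` (K \<times> J)"
  let ?g = "\<lambda>(l::int, j::int). w (l - j) * X j * Y l"
  have "(\<Sum>k\<in>K. \<Sum>j\<in>J. w k * X j * Y (k + j)) = (\<Sum>(k,j)\<in>K \<times> J. w k * X j * Y (k + j))"
    by (simp add: sum.cartesian_product)
  also have "\<dots> = sum ?g ((\<lambda>(k,j). (k + j, j)) ` (K \<times> J))"
    by (subst sum.reindex) (auto simp: inj_on_def intro!: sum.cong)
  also have "\<dots> \<le> sum ?g (?L \<times> J)"
    by (rule sum_mono2) (use assms in \<open>auto intro!: mult_nonneg_nonneg\<close>)
  also have "\<dots> = (\<Sum>l\<in>?L. Y l * (\<Sum>j\<in>J. w (l - j) * X j))"
    by (simp add: sum.cartesian_product[symmetric] sum_distrib_left algebra_simps)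
  also have "\<dots> \<le> (\<Sum>l\<in>?L. Y l * (sqrt (\<Sum>\<^sub>\<infinity>n. (w n)^2) * sqrt (\<Sum>\<^sub>\<infinity>n. (X n)^2)))"
    by (rule sum_mono, rule mult_left_mono)
      (use sum_shifted_products_le(2)[OF assms(2,1,5,4,7)] assms(3) in auto)
  also have "\<dots> = (\<Sum>l\<in>?L. Y l) * (sqrt (\<Sum>\<^sub>\<infinity>n. (w n)^2) * sqrt (\<Sum>\<^sub>\<infinity>n. (X n)^2))"
    by (simp add: sum_distrib_right)
  finally show ?thesis .
qed

lemma sum_pairs_le_sum_differences:
  fixes f :: "int \<times> int \<Rightarrow> real"
  assumes "finite G" "\<And>x. 0 \<le> f x"
  shows "sum f G \<le> (\<Sum>k\<in>(\<lambda>(n,j). n - j) ` G. \<Sum>j\<in>snd ` G. f (k + j, j))"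
proof -
  have "sum f G = sum (\<lambda>(k,j). f (k + j, j)) ((\<lambda>(n,j). (n - j, j)) ` G)"
    by (subst sum.reindex) (auto simp: inj_on_def intro!: sum.cong)
  also have "\<dots> \<le> sum (\<lambda>(k,j). f (k + j, j)) ((\<lambda>(n,j). n - j) ` G \<times> snd ` G)"
    by (rule sum_mono2) (use assms in \<open>force+\<close>)
  also have "\<dots> = (\<Sum>k\<in>(\<lambda>(n,j). n - j) ` G. \<Sum>j\<in>snd ` G. f (k + j, j))"
    by (simp add: sum.cartesian_product)
  finally show ?thesis .
qed

section \<open>Weights and the energy norm\<close>

lemma wt_ge_1: "1 \<le> wt n"
  unfolding wt_def by simp

lemma wt_pos: "0 < wt n"
  unfolding wt_def by simp

lemma sum_inverse_square_wt_le:
  assumes "finite F"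
  shows "(\<Sum>n\<in>F. 1 / wt n ^ 2) \<le> 3"
proof -
  have telescope: "(\<Sum>n\<in>{-int K..int K}. 1 / wt n ^ 2) \<le> 3 - 2 / (real K + 1)" for K
  proof (induction K)
    case (Suc K)
    have "{-int (Suc K)..int (Suc K)} = insert (int K + 1) (insert (- int K - 1) {-int K..int K})"
      by auto
    hence "(\<Sum>n\<in>{-int (Suc K)..int (Suc K)}. 1 / wt n ^ 2)
        = 2 / (real K + 2)^2 + (\<Sum>n\<in>{-int K..int K}. 1 / wt n ^ 2)"
      by (simp add: wt_def add.commute)
    moreover have "2 / (real K + 2)^2 \<le> 2 / (real K + 1) - 2 / (real K + 2)"
      by (simp add: divide_simps power2_eq_square)
    ultimately show ?case using Suc by (simp add: add.commute)
  qed (simp add: wt_def)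
  obtain K :: nat where K: "F \<subseteq> {-int K..int K}"
  proof -
    have "bdd_above (abs ` F)" using assms by simp
    then obtain B where "\<forall>n\<in>F. \<bar>n\<bar> \<le> B" by (auto simp: bdd_above_def)
    thus ?thesis using that[of "nat B"] by force
  qed
  have "(\<Sum>n\<in>F. 1 / wt n ^ 2) \<le> (\<Sum>n\<in>{-int K..int K}. 1 / wt n ^ 2)"
    by (rule sum_mono2) (use K in auto)
  also have "\<dots> \<le> 3" using telescope[of K] by (smt (verit) divide_nonneg_nonneg of_nat_0_le_iff)
  finally show ?thesis .
qed

lemma wt_pow_le_sum: "wt k ^ m \<le> 2 ^ m * (wt j ^ m + wt (k + j) ^ m)"
proof -
  have "wt k \<le> 2 * max (wt j) (wt (k + j))"
    unfolding wt_def by (simp add: max_def) (smt (verit, best) abs_triangle_ineq4 abs_minus_commute)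
  hence "wt k ^ m \<le> (2 * max (wt j) (wt (k + j))) ^ m" by (rule power_mono) (simp add: wt_def)
  also have "\<dots> = 2 ^ m * max (wt j) (wt (k + j)) ^ m" by (simp add: power_mult_distrib)
  also have "max (wt j) (wt (k + j)) ^ m \<le> wt j ^ m + wt (k + j) ^ m"
    using wt_pos[of j] wt_pos[of "k + j"] by (auto simp: max_def)
  finally show ?thesis by (simp add: mult_left_mono)
qed

lemma sum_le_sqrt_3_weighted_l2:
  fixes X :: "int \<Rightarrow> real"
  assumes m: "1 \<le> m" and X: "\<And>n. 0 \<le> X n"
    and s: "(\<lambda>n. (wt n ^ m * X n)^2) summable_on UNIV" and F: "finite F"
  shows "(\<Sum>n\<in>F. X n) \<le> sqrt 3 * sqrt (\<Sum>\<^sub>\<infinity>n. (wt n ^ m * X n)^2)"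
proof -
  have "(\<Sum>n\<in>F. X n) = (\<Sum>n\<in>F. \<bar>1 / wt n ^ m\<bar> * \<bar>wt n ^ m * X n\<bar>)"
    using X wt_pos by (intro sum.cong) (auto simp: abs_mult dest: less_imp_neq[symmetric])
  also have "\<dots> \<le> L2_set (\<lambda>n. 1 / wt n ^ m) F * L2_set (\<lambda>n. wt n ^ m * X n) F"
    by (rule L2_set_mult_ineq)
  also have "\<dots> \<le> sqrt 3 * sqrt (\<Sum>\<^sub>\<infinity>n. (wt n ^ m * X n)^2)"
  proof (rule mult_mono)
    have "(\<Sum>n\<in>F. (1 / wt n ^ m)^2) \<le> (\<Sum>n\<in>F. 1 / wt n ^ 2)"
    proof (rule sum_mono)
      fix n
      have "wt n ^ 1 \<le> wt n ^ m" using m wt_ge_1 by (intro power_increasing) auto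
      hence "wt n ^ 2 \<le> (wt n ^ m)^2" by (intro power_mono) (auto simp: wt_def)
      thus "(1 / wt n ^ m)^2 \<le> 1 / wt n ^ 2"
        using wt_pos[of n] by (simp add: power_one_over divide_left_mono)
    qed
    also have "\<dots> \<le> 3" by (rule sum_inverse_square_wt_le[OF F])
    finally show "L2_set (\<lambda>n. 1 / wt n ^ m) F \<le> sqrt 3" unfolding L2_set_def by simp
    show "L2_set (\<lambda>n. wt n ^ m * X n) F \<le> sqrt (\<Sum>\<^sub>\<infinity>n. (wt n ^ m * X n)^2)"
      by (rule L2_set_le_sqrt_infsum[OF s F])
  qed auto
  finally show ?thesis .
qed

abbreviation square_summable :: "(int \<Rightarrow> complex) \<Rightarrow> bool" where
  "square_summable f \<equiv> (\<lambda>n. (cmod (f n))^2) summable_on UNIV"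

definition symb :: "nat \<Rightarrow> int \<Rightarrow> real" where
  "symb m n = (real_of_int n * pi) ^ (2 * m)"

definition energy_term :: "nat \<Rightarrow> real \<Rightarrow> (int \<Rightarrow> complex) \<Rightarrow> int \<Rightarrow> real" where
  "energy_term m lam u n = (symb m n + lam) * (cmod (u n))^2"

definition energy :: "nat \<Rightarrow> real \<Rightarrow> (int \<Rightarrow> complex) \<Rightarrow> real" where
  "energy m lam u = (\<Sum>\<^sub>\<infinity>n. energy_term m lam u n)"

abbreviation finite_energy :: "nat \<Rightarrow> real \<Rightarrow> (int \<Rightarrow> complex) \<Rightarrow> bool" where
  "finite_energy m lam u \<equiv> energy_term m lam u summable_on UNIV"

lemma symb_nonneg: "0 \<le> symb m n"
  unfolding symb_def by (simp add: zero_le_even_power)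

lemma Dpow_eq_symb: "Dpow m u n = complex_of_real (symb m n) * u n"
  by (simp only: Dpow_def symb_def)

lemma wt_pow_le_symb:
  assumes "1 \<le> lam"
  shows "wt n ^ (2 * m) \<le> 4 ^ m * (symb m n + lam)"
proof -
  let ?x = "real_of_int \<bar>n\<bar>"
  have "wt n \<le> 2 * max 1 ?x" unfolding wt_def by simp
  hence "wt n ^ (2*m) \<le> (2 * max 1 ?x) ^ (2*m)" by (rule power_mono) (simp add: wt_def)
  also have "\<dots> = 4 ^ m * (max 1 ?x) ^ (2*m)" by (simp add: power_mult_distrib power_mult)
  also have "(max 1 ?x) ^ (2*m) \<le> 1 + ?x ^ (2*m)"
    by (cases "1 \<le> ?x") (auto simp: max_def)
  also have "?x ^ (2*m) \<le> symb m n"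
  proof -
    have "?x ^ (2*m) \<le> (?x * pi) ^ (2*m)"
      by (rule power_mono) (use mult_left_mono[of 1 pi ?x] pi_ge_two in auto)
    also have "\<dots> = symb m n" unfolding symb_def
      by (simp add: power_mult_distrib power_even_abs_numeral power_mult[symmetric])
        (metis power_even_abs even_mult_iff even_numeral abs_of_nat power_mult_distrib)
    finally show ?thesis .
  qed
  finally have "wt n ^ (2 * m) \<le> 4 ^ m * (1 + symb m n)" by (simp add: mult_left_mono)
  also have "\<dots> \<le> 4 ^ m * (symb m n + lam)" using assms by (intro mult_left_mono) auto
  finally show ?thesis .
qed

lemma symb_le_wt_pow: "symb m n \<le> pi ^ (2 * m) * wt n ^ (2 * m)"
proof -
  have "symb m n = (\<bar>real_of_int n\<bar> * pi) ^ (2*m)" unfolding symb_def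
    by (metis power_even_abs even_mult_iff even_numeral abs_mult pi_ge_zero abs_of_nonneg)
  also have "\<dots> \<le> (wt n * pi) ^ (2*m)" by (rule power_mono) (auto simp: wt_def)
  finally show ?thesis by (simp add: power_mult_distrib mult.commute)
qed

lemma energy_term_nonneg: "0 \<le> lam \<Longrightarrow> 0 \<le> energy_term m lam u n"
  unfolding energy_term_def using symb_nonneg by simp

lemma energy_nonneg: "0 \<le> lam \<Longrightarrow> 0 \<le> energy m lam u"
  unfolding energy_def by (rule infsum_nonneg) (simp add: energy_term_nonneg)

lemma energy_term_eq_square: "0 \<le> lam \<Longrightarrow> energy_term m lam u n = (sqrt (symb m n + lam) * cmod (u n))^2"
  unfolding energy_term_def using symb_nonneg[of m n] by (simp add: power_mult_distrib)

lemma finite_energy_dominated: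
  assumes "finite_energy m lam u" "\<And>n. g n \<le> C * energy_term m lam u n" "\<And>n. 0 \<le> g n"
  shows "g summable_on UNIV" "(\<Sum>\<^sub>\<infinity>n. g n) \<le> C * energy m lam u"
proof -
  have s: "(\<lambda>n. C * energy_term m lam u n) summable_on UNIV"
    using assms(1) by (rule summable_on_cmult_right)
  show "g summable_on UNIV" by (rule summable_on_comparison_test[OF s]) (use assms in auto)
  hence "(\<Sum>\<^sub>\<infinity>n. g n) \<le> (\<Sum>\<^sub>\<infinity>n. C * energy_term m lam u n)"
    by (rule infsum_mono[OF _ s]) (use assms in auto)
  thus "(\<Sum>\<^sub>\<infinity>n. g n) \<le> C * energy m lam u" by (simp add: energy_def infsum_cmult_right')
qed

lemma finite_energy_l2:
  assumes lam: "1 \<le> lam" and u: "finite_energy m lam u"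
  shows "square_summable u" "lam * (\<Sum>\<^sub>\<infinity>n. (cmod (u n))^2) \<le> energy m lam u"
proof -
  have le: "(cmod (u n))^2 \<le> 1 / lam * energy_term m lam u n" for n
    using lam symb_nonneg[of m n] by (simp add: energy_term_def field_simps)
  note d = finite_energy_dominated[OF u le]
  show "square_summable u" using d(1) lam by simp
  show "lam * (\<Sum>\<^sub>\<infinity>n. (cmod (u n))^2) \<le> energy m lam u" using d(2) lam by (simp add: field_simps)
qed

lemma finite_energy_weighted_l2:
  assumes lam: "1 \<le> lam" and u: "finite_energy m lam u"
  shows "(\<lambda>n. (wt n ^ m * cmod (u n))^2) summable_on UNIV"
    "(\<Sum>\<^sub>\<infinity>n. (wt n ^ m * cmod (u n))^2) \<le> 4 ^ m * energy m lam u"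
proof -
  have le: "(wt n ^ m * cmod (u n))^2 \<le> 4 ^ m * energy_term m lam u n" for n
  proof -
    have "(wt n ^ m * cmod (u n))^2 = wt n ^ (2*m) * (cmod (u n))^2"
      by (simp add: power_mult_distrib power_mult[symmetric] mult.commute)
    also have "\<dots> \<le> 4 ^ m * (symb m n + lam) * (cmod (u n))^2"
      by (rule mult_right_mono[OF wt_pow_le_symb[OF lam]]) simp
    finally show ?thesis by (simp add: energy_term_def mult.assoc)
  qed
  from finite_energy_dominated[OF u le] lam
  show "(\<lambda>n. (wt n ^ m * cmod (u n))^2) summable_on UNIV"
    "(\<Sum>\<^sub>\<infinity>n. (wt n ^ m * cmod (u n))^2) \<le> 4 ^ m * energy m lam u" by auto
qed

lemma finite_energy_norm_bounds:
  assumes lam: "1 \<le> lam" and u: "finite_energy m lam u"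
  shows "sqrt (\<Sum>\<^sub>\<infinity>n. (cmod (u n))^2) \<le> sqrt (energy m lam u) / sqrt lam"
    "sqrt (\<Sum>\<^sub>\<infinity>n. (wt n ^ m * cmod (u n))^2) \<le> 2 ^ m * sqrt (energy m lam u)"
proof -
  show "sqrt (\<Sum>\<^sub>\<infinity>n. (cmod (u n))^2) \<le> sqrt (energy m lam u) / sqrt lam"
    using finite_energy_l2(2)[OF lam u] lam by (simp add: real_sqrt_divide[symmetric] field_simps)
  have "sqrt (\<Sum>\<^sub>\<infinity>n. (wt n ^ m * cmod (u n))^2) \<le> sqrt (4 ^ m * energy m lam u)"
    using finite_energy_weighted_l2(2)[OF lam u] by simp
  thus "sqrt (\<Sum>\<^sub>\<infinity>n. (wt n ^ m * cmod (u n))^2) \<le> 2 ^ m * sqrt (energy m lam u)"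
    by (simp add: real_sqrt_mult real_sqrt_power)
qed

lemma finite_energy_diff:
  assumes "0 \<le> lam" "finite_energy m lam u" "finite_energy m lam v"
  shows "finite_energy m lam (\<lambda>n. u n - v n)"
    "sqrt (energy m lam (\<lambda>n. u n - v n)) \<le> sqrt (energy m lam u) + sqrt (energy m lam v)"
proof -
  let ?h = "\<lambda>u n. sqrt (symb m n + lam) * cmod (u n)"
  have e: "energy_term m lam w = (\<lambda>n. (?h w n)^2)" for w
    by (rule ext) (rule energy_term_eq_square[OF assms(1)])
  have le: "\<bar>?h (\<lambda>n. u n - v n) n\<bar> \<le> \<bar>?h u n\<bar> + \<bar>?h v n\<bar>" for n
  proof -
    have "sqrt (symb m n + lam) * cmod (u n - v n) \<le> sqrt (symb m n + lam) * (cmod (u n) + cmod (v n))"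
      by (rule mult_left_mono[OF norm_triangle_ineq4]) (use assms(1) symb_nonneg[of m n] in simp)
    thus ?thesis using assms(1) symb_nonneg[of m n] by (simp add: abs_mult algebra_simps)
  qed
  note tri = square_summable_triangle[of "?h u" "?h v" "?h (\<lambda>n. u n - v n)"]
  show "finite_energy m lam (\<lambda>n. u n - v n)" using tri(1) assms le by (simp add: e)
  show "sqrt (energy m lam (\<lambda>n. u n - v n)) \<le> sqrt (energy m lam u) + sqrt (energy m lam v)"
    using tri(2) assms le by (simp add: e energy_def)
qed

lemma finite_energy_bounded_mult:
  assumes "0 \<le> lam" "finite_energy m lam u" "\<And>n. cmod (h n) \<le> C"
  shows "finite_energy m lam (\<lambda>n. h n * u n)"
proof -
  have "energy_term m lam (\<lambda>n. h n * u n) n \<le> C^2 * energy_term m lam u n" for n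
  proof -
    have "(cmod (h n))^2 \<le> C^2" using assms(3)[of n] by (intro power_mono) auto
    hence "(cmod (h n))^2 * ((symb m n + lam) * (cmod (u n))^2) \<le> C^2 * ((symb m n + lam) * (cmod (u n))^2)"
      by (rule mult_right_mono) (use assms(1) symb_nonneg[of m n] in simp)
    thus ?thesis by (simp add: energy_term_def norm_mult power_mult_distrib algebra_simps)
  qed
  thus ?thesis by (rule finite_energy_dominated(1)[OF assms(2)]) (simp add: energy_term_nonneg assms(1))
qed

lemma finite_energy_finite_support:
  assumes "0 \<le> lam" "finite F" "\<And>i. i \<notin> F \<Longrightarrow> w i = 0"
  shows "finite_energy m lam w"
proof (rule summable_on_finite_sums_bounded(1)[of _ "sum (energy_term m lam w) F"])
  fix T :: "int set" assume T: "finite T"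
  have "sum (energy_term m lam w) T = sum (energy_term m lam w) (T \<inter> F)"
    by (rule sum.mono_neutral_right) (use T assms in \<open>auto simp: energy_term_def\<close>)
  also have "\<dots> \<le> sum (energy_term m lam w) F"
    by (rule sum_mono2) (use assms energy_term_nonneg in auto)
  finally show "sum (energy_term m lam w) T \<le> sum (energy_term m lam w) F" .
qed (simp add: energy_term_nonneg assms(1))

lemma energy_lower_semicontinuous:
  assumes lam: "0 \<le> lam" and lim: "\<And>i. (\<lambda>k. Y k i) \<longlonglongrightarrow> y i"
    and ev: "\<forall>\<^sub>F k in sequentially. finite_energy m lam (Y k) \<and> energy m lam (Y k) \<le> e"
  shows "finite_energy m lam y" "energy m lam y \<le> e"
proof -
  have "sum (energy_term m lam y) F \<le> e" if F: "finite F" for F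
  proof (rule tendsto_le[OF _ tendsto_const])
    show "(\<lambda>k. sum (energy_term m lam (Y k)) F) \<longlonglongrightarrow> sum (energy_term m lam y) F"
      unfolding energy_term_def by (intro tendsto_intros lim)
    show "\<forall>\<^sub>F k in sequentially. sum (energy_term m lam (Y k)) F \<le> e"
      using ev by eventually_elim
        (use finite_sum_le_infsum_UNIV[OF _ energy_term_nonneg[OF lam] F] in \<open>force simp: energy_def\<close>)
  qed simp
  from summable_on_finite_sums_bounded[OF energy_term_nonneg[OF lam] this]
  show "finite_energy m lam y" "energy m lam y \<le> e" by (simp_all add: energy_def)
qed

lemma hs_iff_finite_energy:
  assumes lam: "1 \<le> lam"
  shows "u \<in> hs pos (real m) \<longleftrightarrow> parity_ok pos u \<and> finite_energy m lam u"
proof -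
  have powr: "wt n powr (2 * real m) = wt n ^ (2 * m)" for n
    using powr_realpow[OF wt_pos, of n "2 * m"] by simp
  have le1: "energy_term m lam u n \<le> (pi ^ (2*m) + lam) * (wt n powr (2 * real m) * (cmod (u n))^2)" for n
  proof -
    have "lam \<le> lam * wt n ^ (2*m)" using lam wt_ge_1[of n] by (simp add: one_le_power)
    hence "symb m n + lam \<le> (pi ^ (2*m) + lam) * wt n ^ (2*m)"
      using symb_le_wt_pow[of m n] by (simp add: algebra_simps)
    from mult_right_mono[OF this, of "(cmod (u n))^2"]
    show ?thesis unfolding energy_term_def powr by (simp add: mult.assoc)
  qed
  have le2: "wt n powr (2 * real m) * (cmod (u n))^2 \<le> 4 ^ m * energy_term m lam u n" for n
    unfolding powr energy_term_def
    using mult_right_mono[OF wt_pow_le_symb[OF lam, of n m], of "(cmod (u n))^2"] by (simp add: mult.assoc)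
  show ?thesis
  proof
    assume "u \<in> hs pos (real m)"
    hence p: "parity_ok pos u" and s: "(\<lambda>n. wt n powr (2 * real m) * (cmod (u n))^2) summable_on UNIV"
      by (auto simp: hs_def)
    have "finite_energy m lam u"
      by (rule summable_on_comparison_test[OF summable_on_cmult_right[OF s, of "pi ^ (2*m) + lam"] le1])
        (use lam in \<open>simp add: energy_term_nonneg\<close>)
    with p show "parity_ok pos u \<and> finite_energy m lam u" by simp
  next
    assume a: "parity_ok pos u \<and> finite_energy m lam u"
    have "(\<lambda>n. wt n powr (2 * real m) * (cmod (u n))^2) summable_on UNIV"
      by (rule summable_on_comparison_test[OF summable_on_cmult_right[OF conjunct2[OF a], of "4 ^ m"] le2])
        simp
    with a show "u \<in> hs pos (real m)" by (simp add: hs_def)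
  qed
qed

lemma mem_L2_iff: "f \<in> L2 pos \<longleftrightarrow> parity_ok pos f \<and> square_summable f"
proof -
  have "(\<lambda>n. wt n powr (2 * 0) * (cmod (f n))^2) = (\<lambda>n. (cmod (f n))^2)"
    using wt_pos by (intro ext) (simp add: less_imp_neq[symmetric])
  thus ?thesis unfolding hs_def by simp
qed

definition delta :: "int \<Rightarrow> int \<Rightarrow> complex" where
  "delta n i = (if i = n then 1 else 0)"

lemma pair_delta: "pair f (delta n) = f n"
proof -
  have "pair f (delta n) = infsum (\<lambda>i. f i * cnj (delta n i)) {n}"
    unfolding pair_def by (rule infsum_cong_neutral) (auto simp: delta_def)
  thus ?thesis by (simp add: delta_def)
qed

lemma parity_ok_vanishes: "parity_ok pos u \<Longrightarrow> \<not> (even n \<longleftrightarrow> pos) \<Longrightarrow> u n = 0"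
  by (auto simp: parity_ok_def)

lemma parity_ok_combination:
  assumes "parity_ok pos f" "parity_ok pos g"
  shows "parity_ok pos (\<lambda>n. f n + c * g n)" "parity_ok pos (\<lambda>n. f n - c * g n)"
proof -
  have "f n \<noteq> 0 \<or> g n \<noteq> 0" if "f n + c * g n \<noteq> 0 \<or> f n - c * g n \<noteq> 0" for n
    using that by auto
  thus "parity_ok pos (\<lambda>n. f n + c * g n)" "parity_ok pos (\<lambda>n. f n - c * g n)"
    using assms unfolding parity_ok_def by blast+
qed

section \<open>The potential is small relative to the energy\<close>

lemma low_frequency_sum_le:
  fixes c U Y :: "int \<Rightarrow> real"
  assumes "\<And>n. 0 \<le> c n" "\<And>n. 0 \<le> U n" "\<And>n. 0 \<le> Y n"
    "(\<lambda>n. (U n)^2) summable_on UNIV" "(\<lambda>n. (Y n)^2) summable_on UNIV" "finite J"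
  shows "(\<Sum>k\<in>K. \<Sum>j\<in>J. c k * U j * Y (k + j))
    \<le> (\<Sum>k\<in>K. c k) * (sqrt (\<Sum>\<^sub>\<infinity>n. (U n)^2) * sqrt (\<Sum>\<^sub>\<infinity>n. (Y n)^2))"
proof -
  have "(\<Sum>k\<in>K. \<Sum>j\<in>J. c k * U j * Y (k + j)) = (\<Sum>k\<in>K. c k * (\<Sum>j\<in>J. U j * Y (k + j)))"
    by (simp add: sum_distrib_left mult.assoc)
  also have "\<dots> \<le> (\<Sum>k\<in>K. c k * (sqrt (\<Sum>\<^sub>\<infinity>n. (U n)^2) * sqrt (\<Sum>\<^sub>\<infinity>n. (Y n)^2)))"
    by (intro sum_mono mult_left_mono sum_shifted_products_le(1)) (use assms in auto)
  finally show ?thesis by (simp add: sum_distrib_right)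
qed

lemma high_frequency_sum_le:
  fixes w U Y :: "int \<Rightarrow> real"
  assumes m: "1 \<le> m" and nonneg: "\<And>n. 0 \<le> w n" "\<And>n. 0 \<le> U n" "\<And>n. 0 \<le> Y n"
    and sw: "(\<lambda>n. (w n)^2) summable_on UNIV"
    and sU: "(\<lambda>n. (wt n ^ m * U n)^2) summable_on UNIV"
    and sY: "(\<lambda>n. (wt n ^ m * Y n)^2) summable_on UNIV"
    and fin: "finite K" "finite J"
  shows "(\<Sum>k\<in>K. \<Sum>j\<in>J. w k * wt k ^ m * U j * Y (k + j))
    \<le> 2 * sqrt 3 * 2 ^ m * sqrt (\<Sum>\<^sub>\<infinity>n. (w n)^2)
        * sqrt (\<Sum>\<^sub>\<infinity>n. (wt n ^ m * U n)^2) * sqrt (\<Sum>\<^sub>\<infinity>n. (wt n ^ m * Y n)^2)"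
proof -
  define Uh where "Uh j = wt j ^ m * U j" for j
  define Yh where "Yh j = wt j ^ m * Y j" for j
  let ?nw = "sqrt (\<Sum>\<^sub>\<infinity>n. (w n)^2)"
  let ?nU = "sqrt (\<Sum>\<^sub>\<infinity>n. (Uh n)^2)" and ?nY = "sqrt (\<Sum>\<^sub>\<infinity>n. (Yh n)^2)"
  have Uh0: "0 \<le> Uh j" and Yh0: "0 \<le> Yh j" for j
    using nonneg wt_pos[of j] by (simp_all add: Uh_def Yh_def)
  have pointwise: "w k * wt k ^ m * U j * Y (k + j)
      \<le> 2 ^ m * (w k * Uh j * Y (k + j) + w k * U j * Yh (k + j))" for k j
  proof -
    have "w k * wt k ^ m * (U j * Y (k + j))
        \<le> w k * (2 ^ m * (wt j ^ m + wt (k + j) ^ m)) * (U j * Y (k + j))"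
      using nonneg by (intro mult_right_mono mult_left_mono wt_pow_le_sum) auto
    thus ?thesis by (simp add: Uh_def Yh_def algebra_simps)
  qed
  have "(\<Sum>k\<in>K. \<Sum>j\<in>J. w k * wt k ^ m * U j * Y (k + j))
      \<le> 2 ^ m * ((\<Sum>k\<in>K. \<Sum>j\<in>J. w k * Uh j * Y (k + j)) + (\<Sum>k\<in>K. \<Sum>j\<in>J. w k * U j * Yh (k + j)))"
    using sum_mono[OF sum_mono[OF pointwise]] by (simp add: sum.distrib flip: sum_distrib_left)
  also have "\<dots> \<le> 2 ^ m * ((sqrt 3 * ?nY) * (?nw * ?nU) + (sqrt 3 * ?nU) * (?nw * ?nY))"
  proof (intro mult_left_mono add_mono)
    have "(\<Sum>k\<in>K. \<Sum>j\<in>J. w k * Uh j * Y (k + j))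
        \<le> (\<Sum>l\<in>(\<lambda>(k,j). k + j) ` (K \<times> J). Y l) * (?nw * ?nU)"
      by (rule trilinear_sum_le_l1_third[OF nonneg(1) Uh0 nonneg(3) sw]) (use sU fin in \<open>simp_all add: Uh_def\<close>)
    also have "\<dots> \<le> (sqrt 3 * ?nY) * (?nw * ?nU)"
      by (rule mult_right_mono, unfold Yh_def, rule sum_le_sqrt_3_weighted_l2[OF m nonneg(3) sY])
        (use fin infsum_square_nonneg[of w] infsum_square_nonneg[of Uh] in auto)
    finally show "(\<Sum>k\<in>K. \<Sum>j\<in>J. w k * Uh j * Y (k + j)) \<le> (sqrt 3 * ?nY) * (?nw * ?nU)" .
    have "(\<Sum>k\<in>K. \<Sum>j\<in>J. w k * U j * Yh (k + j)) \<le> (\<Sum>j\<in>J. U j) * (?nw * ?nY)"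
      by (rule trilinear_sum_le_l1_second[OF nonneg(1,2) Yh0 sw]) (use sY fin in \<open>simp_all add: Yh_def\<close>)
    also have "\<dots> \<le> (sqrt 3 * ?nU) * (?nw * ?nY)"
      by (rule mult_right_mono, unfold Uh_def, rule sum_le_sqrt_3_weighted_l2[OF m nonneg(2) sU])
        (use fin infsum_square_nonneg[of w] infsum_square_nonneg[of Yh] in auto)
    finally show "(\<Sum>k\<in>K. \<Sum>j\<in>J. w k * U j * Yh (k + j)) \<le> (sqrt 3 * ?nU) * (?nw * ?nY)" .
  qed simp
  also have "\<dots> = 2 * sqrt 3 * 2 ^ m * ?nw * ?nU * ?nY" by (simp add: algebra_simps)
  finally show ?thesis by (simp add: Uh_def Yh_def)
qed

lemma low_frequency_energy_le:
  assumes lam: "1 \<le> lam" and u: "finite_energy m lam u" and v: "finite_energy m lam v"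
    and c: "\<And>k. 0 \<le> c k" and J: "finite J"
  shows "(\<Sum>k\<in>K. \<Sum>j\<in>J. c k * cmod (u j) * cmod (v (k + j)))
    \<le> (\<Sum>k\<in>K. c k) * (sqrt (energy m lam u) * sqrt (energy m lam v) / lam)"
proof -
  have "(\<Sum>k\<in>K. \<Sum>j\<in>J. c k * cmod (u j) * cmod (v (k + j)))
      \<le> (\<Sum>k\<in>K. c k) * (sqrt (\<Sum>\<^sub>\<infinity>n. (cmod (u n))^2) * sqrt (\<Sum>\<^sub>\<infinity>n. (cmod (v n))^2))"
    by (rule low_frequency_sum_le) (use c finite_energy_l2(1)[OF lam] u v J in auto)
  also have "\<dots> \<le> (\<Sum>k\<in>K. c k) * (sqrt (energy m lam u) / sqrt lam * (sqrt (energy m lam v) / sqrt lam))"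
    using finite_energy_norm_bounds(1)[OF lam u] finite_energy_norm_bounds(1)[OF lam v] c
      energy_nonneg[of lam m u] lam infsum_square_nonneg[of "\<lambda>n. cmod (u n)"] infsum_square_nonneg[of "\<lambda>n. cmod (v n)"]
    by (intro mult_left_mono mult_mono) (auto simp: sum_nonneg)
  finally show ?thesis using lam by (simp add: real_sqrt_mult[symmetric])
qed

lemma high_frequency_energy_le:
  assumes m: "1 \<le> m" and lam: "1 \<le> lam" and u: "finite_energy m lam u" and v: "finite_energy m lam v"
    and w: "\<And>k. 0 \<le> w k" "(\<lambda>n. (w n)^2) summable_on UNIV" and fin: "finite K" "finite J"
  shows "(\<Sum>k\<in>K. \<Sum>j\<in>J. w k * wt k ^ m * cmod (u j) * cmod (v (k + j)))
    \<le> 2 * sqrt 3 * 8 ^ m * sqrt (\<Sum>\<^sub>\<infinity>n. (w n)^2) * (sqrt (energy m lam u) * sqrt (energy m lam v))"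
proof -
  have "(\<Sum>k\<in>K. \<Sum>j\<in>J. w k * wt k ^ m * cmod (u j) * cmod (v (k + j)))
      \<le> 2 * sqrt 3 * 2 ^ m * sqrt (\<Sum>\<^sub>\<infinity>n. (w n)^2)
        * sqrt (\<Sum>\<^sub>\<infinity>n. (wt n ^ m * cmod (u n))^2) * sqrt (\<Sum>\<^sub>\<infinity>n. (wt n ^ m * cmod (v n))^2)"
    by (rule high_frequency_sum_le[OF m w(1) _ _ w(2) finite_energy_weighted_l2(1)[OF lam u]
          finite_energy_weighted_l2(1)[OF lam v] fin]) simp_all
  also have "\<dots> \<le> 2 * sqrt 3 * 2 ^ m * sqrt (\<Sum>\<^sub>\<infinity>n. (w n)^2)
      * (2 ^ m * sqrt (energy m lam u)) * (2 ^ m * sqrt (energy m lam v))"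
    using finite_energy_norm_bounds(2)[OF lam u] finite_energy_norm_bounds(2)[OF lam v]
      energy_nonneg[of lam m u] lam infsum_square_nonneg[of w]
      infsum_square_nonneg[of "\<lambda>n. wt n ^ m * cmod (u n)"] infsum_square_nonneg[of "\<lambda>n. wt n ^ m * cmod (v n)"]
    by (intro mult_mono mult_left_mono) auto
  also have "(2::real) ^ m * 2 ^ m * 2 ^ m = 8 ^ m"
    by (simp add: power_mult_distrib[symmetric])
  hence "2 * sqrt 3 * 2 ^ m * sqrt (\<Sum>\<^sub>\<infinity>n. (w n)^2) * (2 ^ m * sqrt (energy m lam u)) * (2 ^ m * sqrt (energy m lam v))
      = 2 * sqrt 3 * 8 ^ m * sqrt (\<Sum>\<^sub>\<infinity>n. (w n)^2) * (sqrt (energy m lam u) * sqrt (energy m lam v))"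
    by (simp add: algebra_simps)
  finally show ?thesis .
qed

lemma convolution_form_le_split:
  fixes V u v :: "int \<Rightarrow> complex"
  assumes m: "1 \<le> m" and lam: "1 \<le> lam"
    and u: "finite_energy m lam u" and v: "finite_energy m lam v"
    and tail: "\<And>T. finite T \<Longrightarrow> (\<Sum>k\<in>T. (if N < \<bar>k\<bar> then cmod (V k) / wt k ^ m else 0)^2) \<le> \<tau>"
    and G: "finite G"
  shows "(\<Sum>(n,j)\<in>G. cmod (V (n - j)) * cmod (u j) * cmod (v n))
     \<le> ((\<Sum>k\<in>{-N..N}. cmod (V k)) / lam + 2 * sqrt 3 * 8 ^ m * sqrt \<tau>)
        * sqrt (energy m lam u) * sqrt (energy m lam v)"
proof -
  define w where "w k = (if N < \<bar>k\<bar> then cmod (V k) / wt k ^ m else 0)" for k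
  define K where "K = (\<lambda>(n,j). n - j) ` G"
  define J where "J = snd ` G"
  define S where "S = {-N..N}"
  let ?E = "sqrt (energy m lam u) * sqrt (energy m lam v)"
  let ?f = "\<lambda>k j. cmod (V k) * cmod (u j) * cmod (v (k + j))"
  have fin: "finite K" "finite J" using G by (auto simp: K_def J_def)
  have w: "0 \<le> w k" for k using wt_pos[of k] by (simp add: w_def)
  have sw: "(\<lambda>n. (w n)^2) summable_on UNIV" and nw: "sqrt (\<Sum>\<^sub>\<infinity>n. (w n)^2) \<le> sqrt \<tau>"
    using summable_on_finite_sums_bounded[of "\<lambda>n. (w n)^2" \<tau>] tail unfolding w_def by auto
  have "(\<Sum>(n,j)\<in>G. cmod (V (n - j)) * cmod (u j) * cmod (v n)) \<le> (\<Sum>k\<in>K. \<Sum>j\<in>J. ?f k j)"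
    using sum_pairs_le_sum_differences[OF G, of "\<lambda>(n,j). cmod (V (n - j)) * cmod (u j) * cmod (v n)"]
    by (simp add: K_def J_def case_prod_beta)
  also have "\<dots> = (\<Sum>k\<in>K \<inter> S. \<Sum>j\<in>J. ?f k j) + (\<Sum>k\<in>K - S. \<Sum>j\<in>J. ?f k j)"
    by (rule sum.Int_Diff[OF fin(1)])
  also have "(\<Sum>k\<in>K - S. \<Sum>j\<in>J. ?f k j) = (\<Sum>k\<in>K - S. \<Sum>j\<in>J. w k * wt k ^ m * cmod (u j) * cmod (v (k + j)))"
    using wt_pos by (intro sum.cong refl) (auto simp: S_def w_def dest: less_imp_neq[symmetric])
  also have "(\<Sum>k\<in>K \<inter> S. \<Sum>j\<in>J. ?f k j) \<le> (\<Sum>k\<in>K \<inter> S. cmod (V k)) * (?E / lam)"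
    by (rule low_frequency_energy_le[OF lam u v _ fin(2)]) simp
  also have "\<dots> \<le> (\<Sum>k\<in>S. cmod (V k)) * (?E / lam)"
    using energy_nonneg[of lam m] lam by (intro mult_right_mono sum_mono2) (auto simp: S_def)
  also have "(\<Sum>k\<in>K - S. \<Sum>j\<in>J. w k * wt k ^ m * cmod (u j) * cmod (v (k + j)))
      \<le> 2 * sqrt 3 * 8 ^ m * sqrt (\<Sum>\<^sub>\<infinity>n. (w n)^2) * ?E"
    by (rule high_frequency_energy_le[OF m lam u v w sw]) (use fin in auto)
  also have "\<dots> \<le> 2 * sqrt 3 * 8 ^ m * sqrt \<tau> * ?E"
    using nw energy_nonneg[of lam m] lam by (intro mult_right_mono mult_left_mono) auto
  finally show ?thesis by (simp add: S_def algebra_simps add_divide_distrib)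
qed

lemma hs_negative_tail_small:
  fixes V :: "int \<Rightarrow> complex"
  assumes V: "V \<in> hs pos (- real m)" and tau: "0 < \<tau>"
  obtains N where "\<And>T. finite T \<Longrightarrow> (\<Sum>k\<in>T. (if N < \<bar>k\<bar> then cmod (V k) / wt k ^ m else 0)^2) \<le> \<tau>"
proof -
  define g where "g k = (cmod (V k))^2 / wt k ^ (2 * m)" for k
  have g0: "0 \<le> g k" for k using wt_pos[of k] by (simp add: g_def)
  have "wt k powr (2 * - real m) = 1 / wt k ^ (2 * m)" for k
    using powr_minus[of "wt k" "real (2 * m)"] powr_realpow[OF wt_pos, of k "2 * m"]
    by (simp add: divide_inverse)
  hence "g summable_on UNIV" using V by (simp add: hs_def g_def[abs_def])
  then obtain F where F: "finite F" "\<And>T. finite T \<Longrightarrow> sum g (T - F) \<le> \<tau>"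
    using summable_on_tail_le g0 tau by blast
  have "bdd_above (abs ` F)" using F by simp
  then obtain N where N: "\<forall>k\<in>F. \<bar>k\<bar> \<le> N" by (auto simp: bdd_above_def)
  have "(\<Sum>k\<in>T. (if N < \<bar>k\<bar> then cmod (V k) / wt k ^ m else 0)^2) \<le> \<tau>" if T: "finite T" for T
  proof -
    have "(\<Sum>k\<in>T. (if N < \<bar>k\<bar> then cmod (V k) / wt k ^ m else 0)^2) = (\<Sum>k\<in>T - F. if N < \<bar>k\<bar> then g k else 0)"
      by (rule sum.mono_neutral_cong_right)
        (use T N in \<open>auto simp: g_def power_divide power_mult[symmetric] mult.commute\<close>)
    also have "\<dots> \<le> sum g (T - F)" by (rule sum_mono) (auto simp: g0)
    also have "\<dots> \<le> \<tau>" by (rule F(2)[OF T])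
    finally show ?thesis .
  qed
  thus ?thesis by (rule that)
qed

lemma potential_form_small:
  fixes V :: "int \<Rightarrow> complex"
  assumes m: "1 \<le> m" and V: "V \<in> hs pos (- real m)"
  shows "\<exists>lam\<ge>1. \<forall>u v G. finite_energy m lam u \<longrightarrow> finite_energy m lam v \<longrightarrow> finite G \<longrightarrow>
    (\<Sum>(n,j)\<in>G. cmod (V (n - j)) * cmod (u j) * cmod (v n))
      \<le> 1/4 * sqrt (energy m lam u) * sqrt (energy m lam v)"
proof -
  define \<tau> where "\<tau> = (1 / (16 * sqrt 3 * 8 ^ m))^2"
  have "0 < \<tau>" by (simp add: \<tau>_def)
  then obtain N where tail:
    "\<And>T. finite T \<Longrightarrow> (\<Sum>k\<in>T. (if N < \<bar>k\<bar> then cmod (V k) / wt k ^ m else 0)^2) \<le> \<tau>"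
    using hs_negative_tail_small[OF V] by blast
  define M where "M = (\<Sum>k\<in>{-N..N}. cmod (V k))"
  have M0: "0 \<le> M" unfolding M_def by (simp add: sum_nonneg)
  define lam where "lam = max 1 (8 * M)"
  have lam: "1 \<le> lam" by (simp add: lam_def)
  have coef: "M / lam + 2 * sqrt 3 * 8 ^ m * sqrt \<tau> \<le> 1/4"
  proof -
    have "M / lam \<le> 1/8" using M0 by (auto simp: lam_def field_simps max_def)
    moreover have "2 * sqrt 3 * 8 ^ m * sqrt \<tau> = 1/8" by (simp add: \<tau>_def)
    ultimately show ?thesis by linarith
  qed
  show ?thesis
  proof (intro exI[of _ lam] conjI allI impI lam)
    fix u v :: "int \<Rightarrow> complex" and G :: "(int \<times> int) set"
    assume u: "finite_energy m lam u" and v: "finite_energy m lam v" and G: "finite G"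
    have "(\<Sum>(n,j)\<in>G. cmod (V (n - j)) * cmod (u j) * cmod (v n))
      \<le> (M / lam + 2 * sqrt 3 * 8 ^ m * sqrt \<tau>) * sqrt (energy m lam u) * sqrt (energy m lam v)"
      unfolding M_def by (rule convolution_form_le_split[OF m lam u v tail G])
    also have "\<dots> \<le> 1/4 * sqrt (energy m lam u) * sqrt (energy m lam v)"
      using lam energy_nonneg[of lam m u] energy_nonneg[of lam m v]
      by (intro mult_right_mono coef) auto
    finally show "(\<Sum>(n,j)\<in>G. cmod (V (n - j)) * cmod (u j) * cmod (v n))
      \<le> 1/4 * sqrt (energy m lam u) * sqrt (energy m lam v)" .
  qed
qed

section \<open>Square-summable sequences and contractions\<close>

lemma l2norm_nonneg: "0 \<le> l2norm f"
  unfolding l2norm_def using infsum_square_nonneg[of "\<lambda>n. cmod (f n)"] by simp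

lemma l2norm_add_le:
  assumes "square_summable a" "square_summable b"
  shows "square_summable (\<lambda>n. a n + b n)" "l2norm (\<lambda>n. a n + b n) \<le> l2norm a + l2norm b"
proof -
  have "\<bar>cmod (a n + b n)\<bar> \<le> \<bar>cmod (a n)\<bar> + \<bar>cmod (b n)\<bar>" for n
    using norm_triangle_ineq[of "a n" "b n"] by simp
  note tri = square_summable_triangle[of "\<lambda>n. cmod (a n)" "\<lambda>n. cmod (b n)", OF assms this]
  show "square_summable (\<lambda>n. a n + b n)" using tri(1) .
  show "l2norm (\<lambda>n. a n + b n) \<le> l2norm a + l2norm b" using tri(2) by (simp add: l2norm_def)
qed

lemma square_summable_diff:
  assumes "square_summable a" "square_summable b"
  shows "square_summable (\<lambda>n. a n - b n)"
  using l2norm_add_le(1)[OF assms(1), of "\<lambda>n. - b n"] assms(2) by simp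

lemma l2norm_triangle:
  assumes "square_summable (\<lambda>n. f n - g n)" "square_summable (\<lambda>n. g n - h n)"
  shows "l2norm (\<lambda>n. f n - h n) \<le> l2norm (\<lambda>n. f n - g n) + l2norm (\<lambda>n. g n - h n)"
  using l2norm_add_le(2)[OF assms] by simp

lemma l2norm_diff_commute: "l2norm (\<lambda>n. f n - g n) = l2norm (\<lambda>n. g n - f n)"
  unfolding l2norm_def by (simp add: norm_minus_commute)

lemma l2norm_mult_bounded:
  assumes "square_summable f" "\<And>n. cmod (c n) \<le> C"
  shows "square_summable (\<lambda>n. c n * f n)" "l2norm (\<lambda>n. c n * f n) \<le> C * l2norm f"
proof -
  have C0: "0 \<le> C" using assms(2)[of 0] norm_ge_zero order_trans by blast
  have "\<bar>cmod (c n * f n)\<bar> \<le> C * \<bar>cmod (f n)\<bar>" for n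
    using assms(2)[of n] by (simp add: norm_mult mult_right_mono)
  note cmp = square_summable_comparison[of "\<lambda>n. cmod (f n)", OF assms(1) this]
  show "square_summable (\<lambda>n. c n * f n)" using cmp(1) .
  have "l2norm (\<lambda>n. c n * f n) \<le> sqrt (C^2 * (\<Sum>\<^sub>\<infinity>n. (cmod (f n))^2))"
    unfolding l2norm_def using cmp(2) by simp
  also have "\<dots> = C * l2norm f" using C0 by (simp add: real_sqrt_mult l2norm_def)
  finally show "l2norm (\<lambda>n. c n * f n) \<le> C * l2norm f" .
qed

lemma sum_square_le_l2norm:
  assumes "square_summable f" "finite F"
  shows "(\<Sum>n\<in>F. (cmod (f n))^2) \<le> (l2norm f)^2"
  using finite_sum_le_infsum_UNIV[OF assms(1) _ assms(2)] infsum_square_nonneg[of "\<lambda>n. cmod (f n)"]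
  by (simp add: l2norm_def)

lemma norm_le_l2norm:
  assumes "square_summable f"
  shows "cmod (f n) \<le> l2norm f"
  using sum_square_le_l2norm[OF assms, of "{n}"] l2norm_nonneg[of f] by (simp add: abs_le_square_iff)

lemma l2norm_le_0_imp_zero:
  assumes "square_summable f" "l2norm f \<le> 0"
  shows "f n = 0"
  using norm_le_l2norm[OF assms(1), of n] assms(2) by (metis norm_le_zero_iff order_trans)

lemma l2norm_le_if_finite_sums:
  assumes "\<And>F. finite F \<Longrightarrow> (\<Sum>n\<in>F. (cmod (f n))^2) \<le> B^2" "0 \<le> B"
  shows "square_summable f" "l2norm f \<le> B"
proof -
  show "square_summable f" by (rule summable_on_finite_sums_bounded(1)[OF _ assms(1)]) auto
  have "(\<Sum>\<^sub>\<infinity>n. (cmod (f n))^2) \<le> B^2" by (rule summable_on_finite_sums_bounded(2)[OF _ assms(1)]) auto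
  hence "l2norm f \<le> sqrt (B^2)" unfolding l2norm_def by (rule real_sqrt_le_mono)
  thus "l2norm f \<le> B" using assms(2) by simp
qed

lemma coordinatewise_tendsto_if_l2norm_tendsto:
  assumes "\<And>k. square_summable (\<lambda>i. X k i - u i)" "(\<lambda>k. l2norm (\<lambda>i. X k i - u i)) \<longlonglongrightarrow> 0"
  shows "(\<lambda>k. X k i) \<longlonglongrightarrow> u i"
proof -
  have "(\<lambda>k. X k i - u i) \<longlonglongrightarrow> 0"
    by (rule Lim_null_comparison[OF _ assms(2)])
      (use norm_le_l2norm[OF assms(1)] in \<open>auto intro: always_eventually\<close>)
  thus ?thesis by (simp add: LIM_zero_iff)
qed

lemma l2norm_le_of_pointwise_limit:
  assumes lim: "\<And>n. (\<lambda>l. W l n) \<longlonglongrightarrow> w n"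
    and ev: "\<forall>\<^sub>F l in sequentially. square_summable (W l) \<and> l2norm (W l) \<le> B" and B: "0 \<le> B"
  shows "square_summable w" "l2norm w \<le> B"
proof -
  have "(\<Sum>n\<in>F. (cmod (w n))^2) \<le> B^2" if F: "finite F" for F
  proof (rule tendsto_le[OF _ tendsto_const])
    show "(\<lambda>l. \<Sum>n\<in>F. (cmod (W l n))^2) \<longlonglongrightarrow> (\<Sum>n\<in>F. (cmod (w n))^2)"
      by (intro tendsto_intros lim)
    show "\<forall>\<^sub>F l in sequentially. (\<Sum>n\<in>F. (cmod (W l n))^2) \<le> B^2"
      using ev
    proof eventually_elim
      case (elim l)
      have "(\<Sum>n\<in>F. (cmod (W l n))^2) \<le> (l2norm (W l))^2" by (rule sum_square_le_l2norm[OF _ F]) (use elim in simp)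
      also have "\<dots> \<le> B^2" using elim by (intro power_mono) (simp_all add: l2norm_nonneg)
      finally show ?case .
    qed
  qed simp
  from l2norm_le_if_finite_sums[OF this B] show "square_summable w" "l2norm w \<le> B" by simp_all
qed

lemma l2_complete:
  fixes Y :: "nat \<Rightarrow> int \<Rightarrow> complex" and b :: "nat \<Rightarrow> real"
  assumes Y: "\<And>k. square_summable (Y k)"
    and cauchy: "\<And>k l. k \<le> l \<Longrightarrow> l2norm (\<lambda>n. Y k n - Y l n) \<le> b k" and b: "b \<longlonglongrightarrow> 0"
  obtains Z where "square_summable Z"
    "\<And>k. square_summable (\<lambda>n. Y k n - Z n)" "\<And>k. l2norm (\<lambda>n. Y k n - Z n) \<le> b k"
proof -
  have diff: "square_summable (\<lambda>n. Y k n - Y l n)" for k l by (rule square_summable_diff[OF Y Y])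
  have conv: "Cauchy (\<lambda>k. Y k n)" for n
  proof (rule metric_CauchyI)
    fix e :: real assume "0 < e"
    then obtain M where M: "\<And>k. k \<ge> M \<Longrightarrow> \<bar>b k\<bar> < e"
      using b by (auto simp: LIMSEQ_def dist_real_def)
    have close: "dist (Y k n) (Y l n) < e" if "k \<ge> M" "k \<le> l" for k l
      using norm_le_l2norm[OF diff[of k l], of n] cauchy[OF that(2)] M[OF that(1)] by (simp add: dist_norm)
    show "\<exists>M. \<forall>k\<ge>M. \<forall>l\<ge>M. dist (Y k n) (Y l n) < e"
    proof (intro exI allI impI)
      fix k l assume "k \<ge> M" "l \<ge> M"
      thus "dist (Y k n) (Y l n) < e"
        using close[of k l] close[of l k] by (cases "k \<le> l") (auto simp: dist_commute)
    qed
  qed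
  define Z where "Z n = lim (\<lambda>k. Y k n)" for n
  have Ylim: "(\<lambda>k. Y k n) \<longlonglongrightarrow> Z n" for n
    using conv[of n] unfolding Z_def by (simp add: Cauchy_convergent_iff convergent_LIMSEQ_iff)
  have tail: "square_summable (\<lambda>n. Y k n - Z n)" "l2norm (\<lambda>n. Y k n - Z n) \<le> b k" for k
  proof -
    have lim: "(\<lambda>l. Y k n - Y l n) \<longlonglongrightarrow> Y k n - Z n" for n by (intro tendsto_intros Ylim)
    have "\<forall>\<^sub>F l in sequentially. square_summable (\<lambda>n. Y k n - Y l n) \<and> l2norm (\<lambda>n. Y k n - Y l n) \<le> b k"
      by (rule eventually_sequentiallyI[of k]) (simp add: diff cauchy)
    moreover have "0 \<le> b k" using cauchy[of k k] l2norm_nonneg[of "\<lambda>n. Y k n - Y k n"] by linarith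
    ultimately show "square_summable (\<lambda>n. Y k n - Z n)" "l2norm (\<lambda>n. Y k n - Z n) \<le> b k"
      using l2norm_le_of_pointwise_limit[of "\<lambda>l n. Y k n - Y l n" "\<lambda>n. Y k n - Z n", OF lim] by blast+
  qed
  have "square_summable (\<lambda>n. Y 0 n - (Y 0 n - Z n))" by (rule square_summable_diff[OF Y tail(1)])
  hence "square_summable Z" by simp
  from that[OF this tail] show ?thesis .
qed

lemma cauchy_if_geometric_steps:
  assumes Y: "\<And>k. square_summable (Y k)"
    and step: "\<And>k. l2norm (\<lambda>n. Y (Suc k) n - Y k n) \<le> (1/2)^k * D" and "k \<le> l"
  shows "l2norm (\<lambda>n. Y k n - Y l n) \<le> 2 * D * (1/2)^k"
proof -
  have diff: "square_summable (\<lambda>n. Y k n - Y l n)" for k l by (rule square_summable_diff[OF Y Y])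
  have "l2norm (\<lambda>n. Y l n - Y k n) \<le> 2 * D * (1/2)^k - 2 * D * (1/2)^l"
    using \<open>k \<le> l\<close>
  proof (induction l rule: dec_induct)
    case (step l)
    have "l2norm (\<lambda>n. Y (Suc l) n - Y k n) \<le> l2norm (\<lambda>n. Y (Suc l) n - Y l n) + l2norm (\<lambda>n. Y l n - Y k n)"
      by (rule l2norm_triangle[OF diff diff])
    moreover have "(1/2)^l * D + (2 * D * (1/2)^k - 2 * D * (1/2)^l) = 2 * D * (1/2)^k - 2 * D * (1/2)^(Suc l)"
      by simp
    ultimately show ?case using step.IH assms(2)[of l] by linarith
  qed (simp add: l2norm_def)
  moreover have "0 \<le> D" using step[of 0] l2norm_nonneg[of "\<lambda>n. Y 1 n - Y 0 n"] by simp
  hence "0 \<le> 2 * D * (1/2)^l" by simp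
  ultimately show ?thesis using l2norm_diff_commute[of "Y k" "Y l"] by linarith
qed

lemma contraction_fixed_point:
  fixes T :: "(int \<Rightarrow> complex) \<Rightarrow> (int \<Rightarrow> complex)"
  assumes pres: "\<And>y. square_summable y \<Longrightarrow> square_summable (T y)"
    and contr: "\<And>y1 y2. square_summable y1 \<Longrightarrow> square_summable y2 \<Longrightarrow>
      l2norm (\<lambda>n. T y1 n - T y2 n) \<le> 1/2 * l2norm (\<lambda>n. y1 n - y2 n)"
  shows "\<exists>y. square_summable y \<and> T y = y"
proof -
  define Y where "Y k = (T ^^ k) (\<lambda>_. 0)" for k
  have YS: "Y (Suc k) = T (Y k)" for k by (simp add: Y_def)
  have Y: "square_summable (Y k)" for k
  proof (induction k)
    case 0
    show ?case by (simp add: Y_def)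
  next
    case (Suc k)
    thus ?case unfolding YS by (rule pres)
  qed
  define D where "D = l2norm (\<lambda>n. Y 1 n - Y 0 n)"
  have step: "l2norm (\<lambda>n. Y (Suc k) n - Y k n) \<le> (1/2)^k * D" for k
  proof (induction k)
    case (Suc k)
    have "l2norm (\<lambda>n. Y (Suc (Suc k)) n - Y (Suc k) n) \<le> 1/2 * l2norm (\<lambda>n. Y (Suc k) n - Y k n)"
      using contr[OF Y[of "Suc k"] Y[of k]] by (simp only: YS)
    with Suc show ?case by simp
  qed (simp add: D_def)
  have "(\<lambda>k. 2 * D * (1/2)^k) \<longlonglongrightarrow> 2 * D * 0"
    by (intro tendsto_mult tendsto_const LIMSEQ_power_zero) simp
  hence lim: "(\<lambda>k. 2 * D * (1/2)^k) \<longlonglongrightarrow> 0" by simp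
  obtain Z where Z: "square_summable Z" and tail: "\<And>k. square_summable (\<lambda>n. Y k n - Z n)"
    and tail_bound: "\<And>k. l2norm (\<lambda>n. Y k n - Z n) \<le> 2 * D * (1/2)^k"
    using l2_complete[OF Y cauchy_if_geometric_steps[OF Y step] lim] by blast
  have TZ: "square_summable (T Z)" by (rule pres[OF Z])
  have residual: "l2norm (\<lambda>n. T Z n - Z n) \<le> 2 * D * (1/2)^k" for k
  proof -
    have "l2norm (\<lambda>n. T Z n - Z n) \<le> l2norm (\<lambda>n. T Z n - Y (Suc k) n) + l2norm (\<lambda>n. Y (Suc k) n - Z n)"
      by (rule l2norm_triangle[OF square_summable_diff[OF TZ Y] tail])
    also have "l2norm (\<lambda>n. T Z n - Y (Suc k) n) \<le> 1/2 * l2norm (\<lambda>n. Y k n - Z n)"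
      unfolding YS using contr[OF Z Y[of k]] l2norm_diff_commute[of Z "Y k"] by linarith
    finally show ?thesis using tail_bound[of k] tail_bound[of "Suc k"] by simp
  qed
  have "l2norm (\<lambda>n. T Z n - Z n) \<le> 0"
    by (rule tendsto_lowerbound[OF lim always_eventually]) (use residual in auto)
  hence "T Z = Z"
    using l2norm_le_0_imp_zero[OF square_summable_diff[OF TZ Z]] by (intro ext) simp
  with Z show ?thesis by blast
qed

section \<open>Sectors\<close>

lemma abs_Arg_le_pi_div_4:
  assumes "0 < Re w" "\<bar>Im w\<bar> \<le> Re w"
  shows "\<bar>Arg w\<bar> \<le> pi / 4"
proof -
  have "Im w / Re w \<le> 1" "-1 \<le> Im w / Re w"
    using assms by (simp_all add: divide_le_eq_1_pos le_divide_eq)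
  hence "arctan (Im w / Re w) \<le> arctan 1" "arctan (-1) \<le> arctan (Im w / Re w)"
    by (simp_all only: arctan_le_iff)
  thus ?thesis using arg_conv_arctan[OF assms(1)] by (simp add: arctan_one arctan_minus abs_le_iff)
qed

lemma Re_less_abs_Im_if_not_in_sector:
  assumes "z \<notin> sector (- lam) (pi / 4)"
  shows "Re (z + complex_of_real lam) < \<bar>Im (z + complex_of_real lam)\<bar>"
proof (rule ccontr)
  let ?w = "z + complex_of_real lam"
  assume "\<not> Re ?w < \<bar>Im ?w\<bar>"
  hence h: "\<bar>Im ?w\<bar> \<le> Re ?w" by simp
  have "?w \<noteq> 0" using assms by (auto simp: sector_def eq_neg_iff_add_eq_0)
  hence "0 < Re ?w" using h by (auto simp: complex_eq_iff)
  from abs_Arg_le_pi_div_4[OF this h] show False using assms by (auto simp: sector_def)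
qed

lemma le_2_norm_diff_outside_quarter_plane:
  fixes x :: real and w :: complex
  assumes "0 < x" "Re w < \<bar>Im w\<bar>"
  shows "x \<le> 2 * cmod (complex_of_real x - w)"
proof -
  let ?s = "Re w" and ?t = "Im w"
  have "x^2 \<le> 4 * ((x - ?s)^2 + ?t^2)"
  proof (cases "?s \<le> 0")
    case True
    hence "x^2 \<le> 1 * (x - ?s)^2" using assms(1) by (simp add: power_mono)
    also have "\<dots> \<le> 4 * ((x - ?s)^2 + ?t^2)" by (intro mult_mono) auto
    finally show ?thesis .
  next
    case False
    hence st: "?s^2 \<le> ?t^2"
      using assms(2) by (metis abs_le_square_iff abs_of_nonneg less_imp_le not_le)
    have "2 * ((x - ?s)^2 + ?s^2) - x^2 = (x - 2 * ?s)^2"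
      by (simp add: power2_eq_square algebra_simps)
    hence "x^2 \<le> 2 * ((x - ?s)^2 + ?s^2)" using zero_le_power2[of "x - 2 * ?s"] by linarith
    also have "\<dots> \<le> 2 * ((x - ?s)^2 + ?t^2)" using st by simp
    also have "\<dots> \<le> 4 * ((x - ?s)^2 + ?t^2)" by simp
    finally show ?thesis .
  qed
  also have "\<dots> = (2 * cmod (complex_of_real x - w))^2" by (simp add: cmod_def power_mult_distrib)
  finally show ?thesis by (rule power2_le_imp_le) simp
qed

section \<open>The form and its associated operator\<close>

locale small_potential =
  fixes m :: nat and V :: "int \<Rightarrow> complex" and lam :: real
  assumes lam_ge_1: "1 \<le> lam"
    and V_periodic: "parity_ok True V"
    and small: "\<And>u v G. finite_energy m lam u \<Longrightarrow> finite_energy m lam v \<Longrightarrow> finite G \<Longrightarrow>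
      (\<Sum>(n,j)\<in>G. cmod (V (n - j)) * cmod (u j) * cmod (v n))
        \<le> 1/4 * sqrt (energy m lam u) * sqrt (energy m lam v)"
begin

lemma lam_nonneg: "0 \<le> lam"
  using lam_ge_1 by simp

abbreviation tform :: "(int \<Rightarrow> complex) \<Rightarrow> (int \<Rightarrow> complex) \<Rightarrow> complex" where
  "tform u v \<equiv> pair (Dpow m u) v + pair (mult V u) v"

definition mult_abs :: "(int \<Rightarrow> complex) \<Rightarrow> int \<Rightarrow> real" where
  "mult_abs u n = (\<Sum>\<^sub>\<infinity>j. cmod (V (n - j)) * cmod (u j))"

lemma mult_abs_nonneg: "0 \<le> mult_abs u n"
  unfolding mult_abs_def by (rule infsum_nonneg) simp

lemma mult_abs_summable:
  assumes u: "finite_energy m lam u"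
  shows "(\<lambda>j. cmod (V (n - j)) * cmod (u j)) summable_on UNIV"
proof -
  have d: "finite_energy m lam (delta n)"
    by (rule finite_energy_finite_support[OF lam_nonneg, of "{n}"]) (simp_all add: delta_def)
  show ?thesis
  proof (rule summable_on_finite_sums_bounded(1))
    fix J :: "int set" assume J: "finite J"
    have "(\<Sum>j\<in>J. cmod (V (n - j)) * cmod (u j))
        = (\<Sum>(n',j)\<in>{n} \<times> J. cmod (V (n' - j)) * cmod (u j) * cmod (delta n n'))"
      by (simp add: sum.cartesian_product[symmetric] delta_def)
    also have "\<dots> \<le> 1/4 * sqrt (energy m lam u) * sqrt (energy m lam (delta n))"
      by (rule small[OF u d]) (use J in simp)
    finally show "(\<Sum>j\<in>J. cmod (V (n - j)) * cmod (u j))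
        \<le> 1/4 * sqrt (energy m lam u) * sqrt (energy m lam (delta n))" .
  qed simp
qed

lemma mult_summable:
  assumes "finite_energy m lam u"
  shows "(\<lambda>j. V (n - j) * u j) summable_on UNIV" "cmod (mult V u n) \<le> mult_abs u n"
proof -
  have a: "(\<lambda>j. norm (V (n - j) * u j)) summable_on UNIV"
    using mult_abs_summable[OF assms, of n] by (simp add: norm_mult)
  show "(\<lambda>j. V (n - j) * u j) summable_on UNIV" by (rule abs_summable_summable[OF a])
  show "cmod (mult V u n) \<le> mult_abs u n"
    unfolding mult_def mult_abs_def using norm_infsum_bound[OF a] by (simp add: norm_mult)
qed

lemma mult_abs_pair_le:
  assumes u: "finite_energy m lam u" and v: "finite_energy m lam v"
  shows "(\<lambda>n. mult_abs u n * cmod (v n)) summable_on UNIV"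
    "(\<Sum>\<^sub>\<infinity>n. mult_abs u n * cmod (v n)) \<le> 1/4 * sqrt (energy m lam u) * sqrt (energy m lam v)"
proof -
  let ?B = "1/4 * sqrt (energy m lam u) * sqrt (energy m lam v)"
  let ?f = "\<lambda>n j. cmod (V (n - j)) * cmod (u j) * cmod (v n)"
  have fin: "(\<Sum>n\<in>N. mult_abs u n * cmod (v n)) \<le> ?B" if N: "finite N" for N
  proof -
    have sf: "?f n summable_on UNIV" for n
      using summable_on_cmult_left[OF mult_abs_summable[OF u, of n], of "cmod (v n)"] by simp
    note sums = infsum_sum_finite[OF N, of ?f UNIV]
    have "(\<Sum>n\<in>N. mult_abs u n * cmod (v n)) = infsum (\<lambda>j. \<Sum>n\<in>N. ?f n j) UNIV"
      using sums sf unfolding mult_abs_def by (simp add: infsum_cmult_left')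
    also have "\<dots> \<le> ?B"
    proof (rule infsum_le_finite_sums)
      show "(\<lambda>j. \<Sum>n\<in>N. ?f n j) summable_on UNIV" using sums sf by simp
      fix J :: "int set" assume J: "finite J"
      have "(\<Sum>j\<in>J. \<Sum>n\<in>N. ?f n j) = (\<Sum>(n,j)\<in>N \<times> J. ?f n j)"
        by (subst sum.swap) (simp add: sum.cartesian_product)
      also have "\<dots> \<le> ?B" by (rule small[OF u v]) (use N J in simp)
      finally show "(\<Sum>j\<in>J. \<Sum>n\<in>N. ?f n j) \<le> ?B" .
    qed
    finally show ?thesis .
  qed
  show "(\<lambda>n. mult_abs u n * cmod (v n)) summable_on UNIV" "(\<Sum>\<^sub>\<infinity>n. mult_abs u n * cmod (v n)) \<le> ?B"
    using summable_on_finite_sums_bounded[OF _ fin] mult_abs_nonneg by auto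
qed

lemma pair_mult_le:
  assumes u: "finite_energy m lam u" and v: "finite_energy m lam v"
  shows "(\<lambda>n. mult V u n * cnj (v n)) summable_on UNIV"
    "cmod (pair (mult V u) v) \<le> 1/4 * sqrt (energy m lam u) * sqrt (energy m lam v)"
proof -
  note bound = mult_abs_pair_le[OF u v]
  have le: "norm (mult V u n * cnj (v n)) \<le> mult_abs u n * cmod (v n)" for n
    using mult_summable(2)[OF u, of n] by (simp add: norm_mult mult_right_mono)
  have a: "(\<lambda>n. norm (mult V u n * cnj (v n))) summable_on UNIV"
    by (rule summable_on_comparison_test[OF bound(1)]) (use le mult_abs_nonneg in auto)
  show "(\<lambda>n. mult V u n * cnj (v n)) summable_on UNIV" by (rule abs_summable_summable[OF a])
  have "cmod (pair (mult V u) v) \<le> (\<Sum>\<^sub>\<infinity>n. norm (mult V u n * cnj (v n)))"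
    unfolding pair_def by (rule norm_infsum_bound[OF a])
  also have "\<dots> \<le> (\<Sum>\<^sub>\<infinity>n. mult_abs u n * cmod (v n))"
    by (rule infsum_mono[OF a bound(1) le])
  also have "\<dots> \<le> 1/4 * sqrt (energy m lam u) * sqrt (energy m lam v)" by (rule bound(2))
  finally show "cmod (pair (mult V u) v) \<le> 1/4 * sqrt (energy m lam u) * sqrt (energy m lam v)" .
qed

lemma pair_mult_self_le:
  assumes "finite_energy m lam u"
  shows "cmod (pair (mult V u) u) \<le> energy m lam u / 4"
  using pair_mult_le(2)[OF assms assms] energy_nonneg[OF lam_nonneg, of m u] by (simp add: real_sqrt_mult_self)

lemma pair_Dpow_summable:
  assumes u: "finite_energy m lam u" and v: "finite_energy m lam v"
  shows "(\<lambda>n. Dpow m u n * cnj (v n)) summable_on UNIV"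
proof -
  let ?h = "\<lambda>w n. sqrt (symb m n + lam) * cmod (w n)"
  have e: "energy_term m lam w = (\<lambda>n. (?h w n)^2)" for w
    by (rule ext) (rule energy_term_eq_square[OF lam_nonneg])
  have c: "(\<lambda>n. \<bar>?h u n\<bar> * \<bar>?h v n\<bar>) summable_on UNIV"
    by (rule infsum_abs_mult_le_cauchy_schwarz(1)) (use u v in \<open>simp_all add: e\<close>)
  have "norm (Dpow m u n * cnj (v n)) \<le> \<bar>?h u n\<bar> * \<bar>?h v n\<bar>" for n
  proof -
    have "norm (Dpow m u n * cnj (v n)) = symb m n * (cmod (u n) * cmod (v n))"
      using symb_nonneg[of m n] by (simp add: Dpow_eq_symb norm_mult)
    also have "\<dots> \<le> (symb m n + lam) * (cmod (u n) * cmod (v n))"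
      by (rule mult_right_mono) (auto simp: lam_nonneg)
    also have "\<dots> = \<bar>?h u n\<bar> * \<bar>?h v n\<bar>"
      using symb_nonneg[of m n] lam_nonneg by (simp add: abs_mult algebra_simps)
    finally show ?thesis .
  qed
  hence "(\<lambda>n. norm (Dpow m u n * cnj (v n))) summable_on UNIV"
    by (intro summable_on_comparison_test[OF c]) auto
  thus ?thesis by (rule abs_summable_summable)
qed

lemma pair_Sexpr:
  assumes "finite_energy m lam u" "finite_energy m lam v"
  shows "pair (Sexpr m V u) v = pair (Dpow m u) v + pair (mult V u) v"
  unfolding pair_def Sexpr_def
  using infsum_add[OF pair_Dpow_summable[OF assms] pair_mult_le(1)[OF assms]] by (simp add: algebra_simps)

lemma form_diagonal:
  assumes u: "finite_energy m lam u"
  shows "tform u u = complex_of_real (energy m lam u - lam * (\<Sum>\<^sub>\<infinity>n. (cmod (u n))^2)) + pair (mult V u) u"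
proof -
  have l2: "square_summable u" by (rule finite_energy_l2(1)[OF lam_ge_1 u])
  have symb_part: "(\<lambda>n. symb m n * (cmod (u n))^2) summable_on UNIV"
    by (rule summable_on_comparison_test[OF u])
      (auto simp: energy_term_def symb_nonneg lam_nonneg mult_right_mono)
  have "energy m lam u = (\<Sum>\<^sub>\<infinity>n. symb m n * (cmod (u n))^2 + lam * (cmod (u n))^2)"
    unfolding energy_def energy_term_def by (simp add: algebra_simps)
  also have "\<dots> = (\<Sum>\<^sub>\<infinity>n. symb m n * (cmod (u n))^2) + lam * (\<Sum>\<^sub>\<infinity>n. (cmod (u n))^2)"
    using infsum_add[OF symb_part summable_on_cmult_right[OF l2]] by (simp add: infsum_cmult_right')
  finally have split: "energy m lam u - lam * (\<Sum>\<^sub>\<infinity>n. (cmod (u n))^2) = (\<Sum>\<^sub>\<infinity>n. symb m n * (cmod (u n))^2)"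
    by simp
  have "Dpow m u n * cnj (u n) = complex_of_real (symb m n * (cmod (u n))^2)" for n
    by (simp add: Dpow_eq_symb mult.assoc flip: complex_norm_square)
  moreover have "((\<lambda>n. complex_of_real (symb m n * (cmod (u n))^2))
      has_sum complex_of_real (\<Sum>\<^sub>\<infinity>n. symb m n * (cmod (u n))^2)) UNIV"
    by (rule has_sum_of_real) (use symb_part in \<open>simp add: summable_iff_has_sum_infsum\<close>)
  ultimately have "pair (Dpow m u) u = complex_of_real (\<Sum>\<^sub>\<infinity>n. symb m n * (cmod (u n))^2)"
    unfolding pair_def by (simp add: infsumI)
  thus ?thesis by (simp add: split)
qed

lemma mult_diff:
  assumes "finite_energy m lam u" "finite_energy m lam w"
  shows "mult V (\<lambda>n. u n - w n) n = mult V u n - mult V w n"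
  unfolding mult_def
  using infsum_diff[OF mult_summable(1)[OF assms(1)] mult_summable(1)[OF assms(2)]]
  by (simp add: algebra_simps)

lemma Sexpr_diff:
  assumes "finite_energy m lam u" "finite_energy m lam w"
  shows "Sexpr m V (\<lambda>n. u n - w n) n = Sexpr m V u n - Sexpr m V w n"
  using mult_diff[OF assms, of n] by (simp add: Sexpr_def Dpow_eq_symb algebra_simps)

lemma form_energy_bounds:
  assumes u: "finite_energy m lam u"
  shows "cmod (tform u u) \<le> 5/4 * energy m lam u"
    "3/4 * energy m lam u \<le> cmod (tform u u) + lam * (\<Sum>\<^sub>\<infinity>n. (cmod (u n))^2)"
proof -
  let ?A = "energy m lam u - lam * (\<Sum>\<^sub>\<infinity>n. (cmod (u n))^2)"
  let ?Q = "pair (mult V u) u"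
  have A: "0 \<le> ?A" "?A \<le> energy m lam u"
    using finite_energy_l2(2)[OF lam_ge_1 u] lam_nonneg infsum_square_nonneg[of "\<lambda>n. cmod (u n)"] by auto
  have Q: "cmod ?Q \<le> energy m lam u / 4" by (rule pair_mult_self_le[OF u])
  define a where "a = ?A"
  have e: "tform u u = complex_of_real a + ?Q" unfolding a_def by (rule form_diagonal[OF u])
  have "cmod (complex_of_real a) = a" unfolding a_def by (simp only: norm_of_real abs_of_nonneg[OF A(1)])
  moreover have "cmod (tform u u) \<le> cmod (complex_of_real a) + cmod ?Q"
    unfolding e by (rule norm_triangle_ineq)
  moreover have "cmod (complex_of_real a) \<le> cmod (tform u u) + cmod ?Q"
    using norm_triangle_ineq4[of "tform u u" ?Q] unfolding e by simp
  ultimately have "cmod (tform u u) \<le> ?A + cmod ?Q" "?A \<le> cmod (tform u u) + cmod ?Q"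
    by (simp_all add: a_def)
  thus "cmod (tform u u) \<le> 5/4 * energy m lam u"
    "3/4 * energy m lam u \<le> cmod (tform u u) + lam * (\<Sum>\<^sub>\<infinity>n. (cmod (u n))^2)"
    using A Q by linarith+
qed

lemma form_in_sector:
  assumes u: "finite_energy m lam u" and unit: "l2norm u = 1"
  shows "tform u u \<in> sector (- lam) (pi / 4)"
proof -
  let ?Q = "pair (mult V u) u"
  have one: "(\<Sum>\<^sub>\<infinity>n. (cmod (u n))^2) = 1" using unit unfolding l2norm_def by simp
  have e: "tform u u - complex_of_real (- lam) = complex_of_real (energy m lam u) + ?Q"
    using form_diagonal[OF u] one by (simp add: algebra_simps)
  have Q: "cmod ?Q \<le> energy m lam u / 4" by (rule pair_mult_self_le[OF u])
  have "lam \<le> energy m lam u" using finite_energy_l2(2)[OF lam_ge_1 u] one by simp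
  hence "0 < Re (tform u u - complex_of_real (- lam))"
    "\<bar>Im (tform u u - complex_of_real (- lam))\<bar> \<le> Re (tform u u - complex_of_real (- lam))"
    using Q abs_Re_le_cmod[of ?Q] abs_Im_le_cmod[of ?Q] lam_ge_1 unfolding e by auto
  from abs_Arg_le_pi_div_4[OF this] show ?thesis by (simp add: sector_def)
qed

lemma energy_cauchy_if_form_cauchy:
  assumes X: "\<And>n. finite_energy m lam (X n)" and u: "square_summable u"
    and conv: "(\<lambda>n. l2norm (\<lambda>i. X n i - u i)) \<longlonglongrightarrow> 0"
    and cauchy: "\<forall>\<epsilon>>0. \<exists>N. \<forall>n\<ge>N. \<forall>k\<ge>N. cmod (tform (\<lambda>i. X n i - X k i) (\<lambda>i. X n i - X k i)) < \<epsilon>"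
    and e: "0 < e"
  shows "\<exists>N. \<forall>n\<ge>N. \<forall>k\<ge>N. energy m lam (\<lambda>i. X n i - X k i) \<le> e"
proof -
  have Xu: "square_summable (\<lambda>i. X n i - u i)" for n
    by (rule square_summable_diff[OF finite_energy_l2(1)[OF lam_ge_1 X] u])
  define r where "r = e / (64 * lam)"
  have r0: "0 < r" using e lam_ge_1 by (simp add: r_def)
  have "\<forall>\<^sub>F n in sequentially. l2norm (\<lambda>i. X n i - u i) < sqrt r"
    using conv by (rule order_tendstoD(2)) (simp add: r0)
  then obtain N1 where N1: "\<And>n. n \<ge> N1 \<Longrightarrow> l2norm (\<lambda>i. X n i - u i) < sqrt r"
    unfolding eventually_sequentially by blast
  obtain N2 where N2: "\<And>n k. n \<ge> N2 \<Longrightarrow> k \<ge> N2 \<Longrightarrow> cmod (tform (\<lambda>i. X n i - X k i) (\<lambda>i. X n i - X k i)) < e / 4"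
    using cauchy e by (meson zero_less_divide_iff zero_less_numeral)
  have "energy m lam (\<lambda>i. X n i - X k i) \<le> e" if "n \<ge> max N1 N2" "k \<ge> max N1 N2" for n k
  proof -
    have "l2norm (\<lambda>i. X n i - X k i) \<le> l2norm (\<lambda>i. X n i - u i) + l2norm (\<lambda>i. u i - X k i)"
      by (rule l2norm_triangle[OF Xu square_summable_diff[OF u finite_energy_l2(1)[OF lam_ge_1 X]]])
    also have "\<dots> < 2 * sqrt r"
      using N1[of n] N1[of k] that l2norm_diff_commute[of u "X k"] by simp
    finally have "(l2norm (\<lambda>i. X n i - X k i))^2 \<le> (2 * sqrt r)^2"
      by (intro power_mono) (auto simp: l2norm_nonneg less_imp_le)
    hence l2: "(\<Sum>\<^sub>\<infinity>i. (cmod (X n i - X k i))^2) \<le> 4 * r"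
      using r0 infsum_square_nonneg[of "\<lambda>i. cmod (X n i - X k i)"]
      by (simp add: l2norm_def power_mult_distrib)
    have "3/4 * energy m lam (\<lambda>i. X n i - X k i)
        \<le> cmod (tform (\<lambda>i. X n i - X k i) (\<lambda>i. X n i - X k i)) + lam * (\<Sum>\<^sub>\<infinity>i. (cmod (X n i - X k i))^2)"
      by (rule form_energy_bounds(2)[OF finite_energy_diff(1)[OF lam_nonneg X X]])
    also have "\<dots> \<le> e / 4 + lam * (4 * r)"
      using N2[of n k] that lam_nonneg l2 by (intro add_mono mult_left_mono) auto
    also have "\<dots> = e / 4 + e / 16" using lam_ge_1 by (simp add: r_def)
    finally show ?thesis using e by simp
  qed
  thus ?thesis by blast
qed

lemma energy_tendsto_0_if_form_cauchy:
  assumes X: "\<And>n. finite_energy m lam (X n)" and u: "square_summable u"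
    and conv: "(\<lambda>n. l2norm (\<lambda>i. X n i - u i)) \<longlonglongrightarrow> 0"
    and cauchy: "\<forall>\<epsilon>>0. \<exists>N. \<forall>n\<ge>N. \<forall>k\<ge>N. cmod (tform (\<lambda>i. X n i - X k i) (\<lambda>i. X n i - X k i)) < \<epsilon>"
    and e: "0 < e"
  shows "\<exists>N. \<forall>n\<ge>N. finite_energy m lam (\<lambda>i. X n i - u i) \<and> energy m lam (\<lambda>i. X n i - u i) \<le> e"
proof -
  obtain N where N: "\<And>n k. n \<ge> N \<Longrightarrow> k \<ge> N \<Longrightarrow> energy m lam (\<lambda>i. X n i - X k i) \<le> e"
    using energy_cauchy_if_form_cauchy[OF X u conv cauchy e] by blast
  have Xu: "square_summable (\<lambda>i. X n i - u i)" for n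
    by (rule square_summable_diff[OF finite_energy_l2(1)[OF lam_ge_1 X] u])
  have Xlim: "(\<lambda>k. X k i) \<longlonglongrightarrow> u i" for i
    by (rule coordinatewise_tendsto_if_l2norm_tendsto[OF Xu conv])
  show ?thesis
  proof (intro exI[of _ N] allI impI)
    fix n assume "n \<ge> N"
    have lim: "(\<lambda>k. X n i - X k i) \<longlonglongrightarrow> X n i - u i" for i by (intro tendsto_intros Xlim)
    have "\<forall>\<^sub>F k in sequentially. finite_energy m lam (\<lambda>i. X n i - X k i) \<and> energy m lam (\<lambda>i. X n i - X k i) \<le> e"
      by (rule eventually_sequentiallyI[of N]) (use finite_energy_diff(1)[OF lam_nonneg X X] N \<open>n \<ge> N\<close> in simp)
    from energy_lower_semicontinuous[OF lam_nonneg lim this]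
    show "finite_energy m lam (\<lambda>i. X n i - u i) \<and> energy m lam (\<lambda>i. X n i - u i) \<le> e" by simp
  qed
qed

lemma closed_form:
  "closed_form pos (hs pos (real m)) tform"
  unfolding closed_form_def
proof (intro allI impI, elim conjE)
  fix X :: "nat \<Rightarrow> int \<Rightarrow> complex" and u :: "int \<Rightarrow> complex"
  assume XD: "\<forall>n. X n \<in> hs pos (real m)" and uL: "u \<in> L2 pos"
    and conv: "(\<lambda>n. l2norm (\<lambda>i. X n i - u i)) \<longlonglongrightarrow> 0"
    and cauchy: "\<forall>\<epsilon>>0. \<exists>N. \<forall>n\<ge>N. \<forall>k\<ge>N. cmod (tform (\<lambda>i. X n i - X k i) (\<lambda>i. X n i - X k i)) < \<epsilon>"
  have X: "finite_energy m lam (X n)" for n using XD hs_iff_finite_energy[OF lam_ge_1] by blast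
  have pu: "parity_ok pos u" and lu: "square_summable u" using uL mem_L2_iff by auto
  note small_energy = energy_tendsto_0_if_form_cauchy[OF X lu conv cauchy]
  obtain N0 where "finite_energy m lam (\<lambda>i. X N0 i - u i)" using small_energy[of 1] by auto
  from finite_energy_diff(1)[OF lam_nonneg X[of N0] this] have "finite_energy m lam u" by simp
  hence uD: "u \<in> hs pos (real m)" using hs_iff_finite_energy[OF lam_ge_1] pu by blast
  have "(\<lambda>n. tform (\<lambda>i. X n i - u i) (\<lambda>i. X n i - u i)) \<longlonglongrightarrow> 0"
  proof (rule LIMSEQ_I)
    fix r :: real assume r: "0 < r"
    obtain N where N: "\<And>n. n \<ge> N \<Longrightarrow> finite_energy m lam (\<lambda>i. X n i - u i)
        \<and> energy m lam (\<lambda>i. X n i - u i) \<le> r / 2"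
      using small_energy[of "r/2"] r by auto
    have "norm (tform (\<lambda>i. X n i - u i) (\<lambda>i. X n i - u i) - 0) < r" if "n \<ge> N" for n
      using form_energy_bounds(1)[of "\<lambda>i. X n i - u i"] N[OF that] r by simp
    thus "\<exists>N. \<forall>n\<ge>N. norm (tform (\<lambda>i. X n i - u i) (\<lambda>i. X n i - u i) - 0) < r" by blast
  qed
  with uD show "u \<in> hs pos (real m) \<and> (\<lambda>n. tform (\<lambda>i. X n i - u i) (\<lambda>i. X n i - u i)) \<longlonglongrightarrow> 0"
    by blast
qed

lemma hs_subset_L2: "hs pos (real m) \<subseteq> L2 pos"
  using hs_iff_finite_energy[OF lam_ge_1] finite_energy_l2(1)[OF lam_ge_1] mem_L2_iff by blast

lemma sectorial_form: "sectorial_form pos (hs pos (real m)) tform"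
  unfolding sectorial_form_def
  using hs_subset_L2 form_in_sector hs_iff_finite_energy[OF lam_ge_1]
  by (intro conjI exI[of _ "- lam"] exI[of _ "pi/4"]) auto

abbreviation operator_domain :: "bool \<Rightarrow> (int \<Rightarrow> complex) set" where
  "operator_domain pos \<equiv> {u \<in> hs pos (real m). Sexpr m V u \<in> L2 pos}"

lemma delta_in_hs:
  assumes "even n \<longleftrightarrow> pos"
  shows "delta n \<in> hs pos (real m)"
proof -
  have "parity_ok pos (delta n)" using assms by (auto simp: parity_ok_def delta_def)
  moreover have "finite_energy m lam (delta n)"
    by (rule finite_energy_finite_support[OF lam_nonneg, of "{n}"]) (auto simp: delta_def)
  ultimately show ?thesis using hs_iff_finite_energy[OF lam_ge_1] by blast
qed

lemma mult_wrong_parity: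
  assumes "parity_ok pos u" "\<not> (even n \<longleftrightarrow> pos)"
  shows "mult V u n = 0"
  unfolding mult_def
proof (rule infsum_0)
  fix j
  show "V (n - j) * u j = 0"
  proof (cases "even j \<longleftrightarrow> pos")
    case True
    hence "odd (n - j)" using assms(2) by auto
    thus ?thesis using V_periodic by (auto simp: parity_ok_def)
  qed (simp add: parity_ok_vanishes[OF assms(1)])
qed

lemma Sexpr_wrong_parity:
  assumes "parity_ok pos u" "\<not> (even n \<longleftrightarrow> pos)"
  shows "Sexpr m V u n = 0"
  using mult_wrong_parity[OF assms] parity_ok_vanishes[OF assms] by (simp add: Sexpr_def Dpow_def)

lemma represented_by_Sexpr:
  assumes u: "u \<in> hs pos (real m)" and w: "w \<in> L2 pos"
    and rep: "\<forall>v\<in>hs pos (real m). tform u v = pair w v"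
  shows "Sexpr m V u = w"
proof
  fix n
  have u': "finite_energy m lam u" "parity_ok pos u" using u hs_iff_finite_energy[OF lam_ge_1] by auto
  show "Sexpr m V u n = w n"
  proof (cases "even n \<longleftrightarrow> pos")
    case True
    note d = delta_in_hs[OF True]
    have "pair (Sexpr m V u) (delta n) = pair w (delta n)"
      using rep d pair_Sexpr[OF u'(1)] hs_iff_finite_energy[OF lam_ge_1] by auto
    thus ?thesis by (simp add: pair_delta)
  next
    case False
    thus ?thesis using Sexpr_wrong_parity[OF u'(2)] parity_ok_vanishes[of pos w] w mem_L2_iff by auto
  qed
qed

lemma associated_operator:
  "assoc_op pos (hs pos (real m)) tform (operator_domain pos) (Sexpr m V)"
proof -
  have Sexpr_rep: "tform u v = pair (Sexpr m V u) v" if "u \<in> hs pos (real m)" "v \<in> hs pos (real m)" for u v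
    using pair_Sexpr that hs_iff_finite_energy[OF lam_ge_1] by auto
  have "operator_domain pos
      = {u \<in> hs pos (real m). \<exists>w\<in>L2 pos. \<forall>v\<in>hs pos (real m). tform u v = pair w v}"
    using Sexpr_rep represented_by_Sexpr by blast
  thus ?thesis unfolding assoc_op_def using Sexpr_rep by auto
qed

lemma dense_domain: "densely_defined pos (hs pos (real m))"
  unfolding densely_defined_def
proof (intro conjI ballI allI impI hs_subset_L2)
  fix f :: "int \<Rightarrow> complex" and \<epsilon> :: real
  assume f: "f \<in> L2 pos" and e: "0 < \<epsilon>"
  have "square_summable f" using f mem_L2_iff by blast
  then obtain F where F: "finite F" "\<And>T. finite T \<Longrightarrow> (\<Sum>i\<in>T - F. (cmod (f i))^2) \<le> (\<epsilon> / 2)^2"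
    using summable_on_tail_le[of "\<lambda>i. (cmod (f i))^2" "(\<epsilon> / 2)^2"] e by auto
  define u where "u i = (if i \<in> F then f i else 0)" for i
  have "parity_ok pos u" using f by (auto simp: parity_ok_def u_def hs_def)
  moreover have "finite_energy m lam u"
    by (rule finite_energy_finite_support[OF lam_nonneg F(1)]) (simp add: u_def)
  ultimately have uD: "u \<in> hs pos (real m)" using hs_iff_finite_energy[OF lam_ge_1] by blast
  have "(\<Sum>i\<in>T. (cmod (f i - u i))^2) \<le> (\<epsilon> / 2)^2" if T: "finite T" for T
  proof -
    have "(\<Sum>i\<in>T. (cmod (f i - u i))^2) = (\<Sum>i\<in>T - F. (cmod (f i))^2)"
      by (rule sum.mono_neutral_cong_right) (use T in \<open>auto simp: u_def\<close>)
    thus ?thesis using F(2)[OF T] by simp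
  qed
  hence "l2norm (\<lambda>i. f i - u i) \<le> \<epsilon> / 2"
    using l2norm_le_if_finite_sums(2)[of "\<lambda>i. f i - u i" "\<epsilon> / 2"] e by simp
  also have "\<dots> < \<epsilon>" using e by simp
  finally show "\<exists>u\<in>hs pos (real m). l2norm (\<lambda>n. f n - u n) < \<epsilon>" using uD by blast
qed

text \<open>A periodic \<open>V\<close> couples only modes of equal parity, so projecting a solution of
  \<open>(S - z) u = f\<close> onto the parity class of \<open>f\<close> gives a solution in the right space.\<close>

lemma mult_parity_projection:
  assumes "even n \<longleftrightarrow> pos"
  shows "mult V (\<lambda>j. if even j \<longleftrightarrow> pos then u j else 0) n = mult V u n"
  unfolding mult_def
proof (rule infsum_cong)
  fix j
  show "V (n - j) * (if even j \<longleftrightarrow> pos then u j else 0) = V (n - j) * u j"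
  proof (cases "even j \<longleftrightarrow> pos")
    case False
    hence "odd (n - j)" using assms by auto
    thus ?thesis using V_periodic by (auto simp: parity_ok_def)
  qed simp
qed

lemma parity_projection_solves:
  assumes u: "finite_energy m lam u" and eq: "\<And>n. Sexpr m V u n - z * u n = f n"
    and f: "parity_ok pos f"
  defines "v \<equiv> \<lambda>n. if even n \<longleftrightarrow> pos then u n else 0"
  shows "v \<in> hs pos (real m)" "\<And>n. Sexpr m V v n - z * v n = f n"
proof -
  have v_eq: "v = (\<lambda>n. (if even n \<longleftrightarrow> pos then 1 else 0) * u n)" by (simp add: v_def fun_eq_iff)
  have "finite_energy m lam v" unfolding v_eq by (rule finite_energy_bounded_mult[OF lam_nonneg u, of _ 1]) simp
  moreover have v_par: "parity_ok pos v" by (auto simp: parity_ok_def v_def)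
  ultimately show "v \<in> hs pos (real m)" using hs_iff_finite_energy[OF lam_ge_1] by blast
  fix n
  show "Sexpr m V v n - z * v n = f n"
  proof (cases "even n \<longleftrightarrow> pos")
    case True
    thus ?thesis using eq[of n] mult_parity_projection[OF True, of u]
      by (simp add: v_def Sexpr_def Dpow_def)
  next
    case False
    thus ?thesis using Sexpr_wrong_parity[OF v_par False] parity_ok_vanishes[OF f False]
      by (simp add: v_def)
  qed
qed

end

section \<open>The resolvent\<close>

lemma unimodular_rescaling_iff:
  fixes p r g y f M :: complex
  assumes p: "cnj p * p = 1" and g: "g * r * r = p"
  shows "cnj p * (r * f - r * M) = y \<longleftrightarrow> g * (r * y) + M = f"
proof
  assume y: "cnj p * (r * f - r * M) = y"
  have "g * (r * y) = (g * r * r) * cnj p * (f - M)" unfolding y[symmetric] by (simp add: algebra_simps)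
  also have "\<dots> = f - M" using p g by (simp add: mult.commute)
  finally show "g * (r * y) + M = f" by simp
next
  assume f: "g * (r * y) + M = f"
  have "cnj p * (r * f - r * M) = cnj p * ((g * r * r) * y)" unfolding f[symmetric] by (simp add: algebra_simps)
  also have "\<dots> = y" using p g by (simp add: mult.assoc[symmetric])
  finally show "cnj p * (r * f - r * M) = y" .
qed

lemma le_quarter_if_le_geometric_mean:
  fixes S N :: real
  assumes "0 \<le> S" "0 \<le> N" "S \<le> 1/4 * sqrt (2 * N) * sqrt (2 * S)"
  shows "S \<le> N / 4"
proof -
  have "S^2 \<le> (1/4 * sqrt (2 * N) * sqrt (2 * S))^2" using assms by (intro power_mono) auto
  also have "\<dots> = 1/16 * (sqrt (2 * N))^2 * (sqrt (2 * S))^2" by (simp add: power_mult_distrib power_divide)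
  also have "\<dots> = N / 4 * S" using assms(1,2) by simp
  finally have "S * S \<le> N / 4 * S" by (simp add: power2_eq_square)
  thus ?thesis using assms(1,2) by (cases "S = 0") auto
qed

locale resolvent_point = small_potential +
  fixes z :: complex
  assumes z_far: "\<And>n. symb m n + lam \<le> 2 * cmod (complex_of_real (symb m n) - z)"
begin

definition gap :: "int \<Rightarrow> complex" where
  "gap n = complex_of_real (symb m n) - z"

definition gap_rsqrt :: "int \<Rightarrow> real" where
  "gap_rsqrt n = 1 / sqrt (cmod (gap n))"

definition phase :: "int \<Rightarrow> complex" where
  "phase n = gap n / complex_of_real (cmod (gap n))"

text \<open>Writing \<open>S - z = |gap|^(1/2) (phase + K) |gap|^(1/2)\<close> with the Birman-Schwinger operator
  \<open>K = |gap|^(-1/2) V |gap|^(-1/2)\<close>, the equation \<open>(S - z) u = f\<close> becomes a fixed-point problem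
  for \<open>y = |gap|^(1/2) u\<close>, and the choice of lam makes \<open>K\<close> a contraction with norm at most 1/2.\<close>

definition rescale :: "(int \<Rightarrow> complex) \<Rightarrow> int \<Rightarrow> complex" where
  "rescale y = (\<lambda>n. complex_of_real (gap_rsqrt n) * y n)"

lemma rescale_apply: "rescale y n = complex_of_real (gap_rsqrt n) * y n"
  by (simp add: rescale_def)

definition birman_schwinger :: "(int \<Rightarrow> complex) \<Rightarrow> int \<Rightarrow> complex" where
  "birman_schwinger y = rescale (mult V (rescale y))"

definition resolvent_map :: "(int \<Rightarrow> complex) \<Rightarrow> (int \<Rightarrow> complex) \<Rightarrow> int \<Rightarrow> complex" where
  "resolvent_map f y = (\<lambda>n. cnj (phase n) * (rescale f n - birman_schwinger y n))"

lemma gap_pos: "0 < cmod (gap n)"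
proof -
  have "0 < symb m n + lam" using symb_nonneg[of m n] lam_ge_1 by linarith
  hence "0 < 2 * cmod (gap n)" using z_far[of n] unfolding gap_def by linarith
  thus ?thesis by simp
qed

lemma gap_rsqrt_pos: "0 < gap_rsqrt n"
  using gap_pos[of n] by (simp add: gap_rsqrt_def)

lemma gap_rsqrt_sq: "(gap_rsqrt n)^2 = 1 / cmod (gap n)"
  using gap_pos[of n] by (simp add: gap_rsqrt_def power_divide)

lemma weight_gap_rsqrt_le_2: "(symb m n + lam) * (gap_rsqrt n)^2 \<le> 2"
  using z_far[of n] gap_pos[of n] by (simp add: gap_rsqrt_sq gap_def field_simps)

lemma gap_rsqrt_le: "gap_rsqrt n \<le> sqrt 2"
proof -
  have "1 * (gap_rsqrt n)^2 \<le> (symb m n + lam) * (gap_rsqrt n)^2"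
    using symb_nonneg[of m n] lam_ge_1 by (intro mult_right_mono) auto
  hence "(gap_rsqrt n)^2 \<le> 2" using weight_gap_rsqrt_le_2[of n] by linarith
  thus ?thesis by (rule real_le_rsqrt)
qed

lemma norm_phase: "cmod (phase n) = 1"
  using gap_pos[of n] by (simp add: phase_def norm_divide)

lemma cnj_phase_mult: "cnj (phase n) * phase n = 1"
  using norm_phase[of n] by (metis complex_norm_square mult.commute of_real_1 power_one)

lemma gap_mult_gap_rsqrt: "gap n * gap_rsqrt n * gap_rsqrt n = phase n"
proof -
  have "complex_of_real (gap_rsqrt n) * complex_of_real (gap_rsqrt n) = 1 / complex_of_real (cmod (gap n))"
    using gap_rsqrt_sq[of n] by (simp add: power2_eq_square flip: of_real_mult)
  thus ?thesis by (simp add: phase_def mult.assoc)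
qed

lemma gap_rsqrt_mult_energy:
  assumes y: "square_summable y"
  shows "finite_energy m lam (rescale y)"
    "energy m lam (rescale y) \<le> 2 * (\<Sum>\<^sub>\<infinity>n. (cmod (y n))^2)"
proof -
  have le: "energy_term m lam (rescale y) n \<le> 2 * (cmod (y n))^2" for n
    using mult_right_mono[OF weight_gap_rsqrt_le_2[of n], of "(cmod (y n))^2"] gap_rsqrt_pos[of n]
    by (simp add: energy_term_def rescale_apply norm_mult power_mult_distrib mult.assoc)
  have s: "(\<lambda>n. 2 * (cmod (y n))^2) summable_on UNIV" by (rule summable_on_cmult_right[OF y])
  show e: "finite_energy m lam (rescale y)"
    by (rule summable_on_comparison_test[OF s]) (use le energy_term_nonneg[OF lam_nonneg] in auto)
  have "energy m lam (rescale y) \<le> (\<Sum>\<^sub>\<infinity>n. 2 * (cmod (y n))^2)"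
    unfolding energy_def by (rule infsum_mono[OF e s le])
  thus "energy m lam (rescale y) \<le> 2 * (\<Sum>\<^sub>\<infinity>n. (cmod (y n))^2)"
    by (simp add: infsum_cmult_right')
qed

lemma pair_mult_rescale_truncated:
  fixes u :: "int \<Rightarrow> complex"
  assumes F: "finite F"
  defines "h \<equiv> \<lambda>n. if n \<in> F then rescale (mult V u) n else 0"
  shows "pair (mult V u) (rescale h) = complex_of_real (\<Sum>n\<in>F. (cmod (h n))^2)"
proof -
  let ?M = "mult V u"
  have "pair ?M (rescale h) = (\<Sum>n\<in>F. ?M n * cnj (rescale h n))"
    unfolding pair_def by (rule finite_support_summable_on(2)[OF F]) (simp add: h_def rescale_apply)
  also have "\<dots> = complex_of_real (\<Sum>n\<in>F. (cmod (h n))^2)"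
    unfolding of_real_sum
  proof (intro sum.cong refl)
    fix n assume "n \<in> F"
    hence "?M n * cnj (rescale h n) = complex_of_real ((gap_rsqrt n)^2) * (?M n * cnj (?M n))"
      by (simp add: h_def rescale_apply power2_eq_square algebra_simps)
    also have "\<dots> = complex_of_real ((gap_rsqrt n)^2 * (cmod (?M n))^2)"
      by (simp only: of_real_mult complex_norm_square)
    also have "\<dots> = complex_of_real ((cmod (h n))^2)"
      using \<open>n \<in> F\<close> gap_rsqrt_pos[of n] by (simp add: h_def rescale_apply norm_mult power_mult_distrib)
    finally show "?M n * cnj (rescale h n) = complex_of_real ((cmod (h n))^2)" .
  qed
  finally show ?thesis .
qed

lemma birman_schwinger_bound:
  assumes y: "square_summable y"
  shows "square_summable (birman_schwinger y)" "l2norm (birman_schwinger y) \<le> l2norm y / 2"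
proof -
  define N where "N = (\<Sum>\<^sub>\<infinity>n. (cmod (y n))^2)"
  have u: "finite_energy m lam (rescale y)" and Eu: "energy m lam (rescale y) \<le> 2 * N"
    using gap_rsqrt_mult_energy[OF y] by (simp_all add: N_def)
  have N0: "0 \<le> N" unfolding N_def by (rule infsum_square_nonneg)
  have "(\<Sum>n\<in>F. (cmod (birman_schwinger y n))^2) \<le> (l2norm y / 2)^2" if F: "finite F" for F
  proof -
    define h where "h = (\<lambda>n. if n \<in> F then birman_schwinger y n else 0)"
    define S where "S = (\<Sum>n\<in>F. (cmod (h n))^2)"
    have S0: "0 \<le> S" unfolding S_def by (simp add: sum_nonneg)
    note h = finite_support_summable_on[OF F, of "\<lambda>n. (cmod (h n))^2"]
    have g: "finite_energy m lam (rescale h)" and Eg: "energy m lam (rescale h) \<le> 2 * S"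
      using gap_rsqrt_mult_energy[of h] h by (simp_all add: S_def h_def)
    have "pair (mult V (rescale y)) (rescale h) = complex_of_real S"
      unfolding S_def h_def birman_schwinger_def by (rule pair_mult_rescale_truncated[OF F])
    hence "S = cmod (pair (mult V (rescale y)) (rescale h))" using S0 by simp
    also have "\<dots> \<le> 1/4 * sqrt (energy m lam (rescale y)) * sqrt (energy m lam (rescale h))"
      by (rule pair_mult_le(2)[OF u g])
    also have "\<dots> \<le> 1/4 * sqrt (2 * N) * sqrt (2 * S)"
      using Eu Eg energy_nonneg[OF lam_nonneg] N0 by (intro mult_mono mult_left_mono) auto
    finally have "S \<le> N / 4" by (rule le_quarter_if_le_geometric_mean[OF S0 N0])
    also have "\<dots> = (l2norm y / 2)^2" using N0 by (simp add: l2norm_def N_def power_divide)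
    finally show ?thesis by (simp add: S_def h_def)
  qed
  from l2norm_le_if_finite_sums[OF this]
  show "square_summable (birman_schwinger y)" "l2norm (birman_schwinger y) \<le> l2norm y / 2"
    by (simp_all add: l2norm_nonneg)
qed

lemma rescale_diff: "rescale (\<lambda>n. y1 n - y2 n) = (\<lambda>n. rescale y1 n - rescale y2 n)"
  by (simp add: rescale_def algebra_simps)

lemma birman_schwinger_diff:
  assumes "square_summable y1" "square_summable y2"
  shows "birman_schwinger (\<lambda>n. y1 n - y2 n) n = birman_schwinger y1 n - birman_schwinger y2 n"
proof -
  have "mult V (rescale (\<lambda>n. y1 n - y2 n)) n = mult V (rescale y1) n - mult V (rescale y2) n"
    unfolding rescale_diff
    by (rule mult_diff[OF gap_rsqrt_mult_energy(1)[OF assms(1)] gap_rsqrt_mult_energy(1)[OF assms(2)]])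
  thus ?thesis unfolding birman_schwinger_def rescale_apply by (simp add: right_diff_distrib)
qed

lemma resolvent_map_bound:
  assumes f: "square_summable f" and y: "square_summable y"
  shows "square_summable (resolvent_map f y)"
    "l2norm (resolvent_map f y) \<le> sqrt 2 * l2norm f + l2norm y / 2"
proof -
  have bounds: "\<And>n. cmod (cnj (phase n) * complex_of_real (gap_rsqrt n)) \<le> sqrt 2"
      "\<And>n. cmod (- cnj (phase n)) \<le> 1"
    using gap_rsqrt_le gap_rsqrt_pos by (simp_all add: norm_mult norm_phase less_imp_le)
  note a = l2norm_mult_bounded[OF f, of "\<lambda>n. cnj (phase n) * complex_of_real (gap_rsqrt n)", OF bounds(1)]
  note K = birman_schwinger_bound[OF y]
  note b = l2norm_mult_bounded[OF K(1), of "\<lambda>n. - cnj (phase n)", OF bounds(2)]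
  have e: "resolvent_map f y = (\<lambda>n. cnj (phase n) * complex_of_real (gap_rsqrt n) * f n
      + - cnj (phase n) * birman_schwinger y n)"
    by (simp add: resolvent_map_def rescale_apply algebra_simps)
  show "square_summable (resolvent_map f y)" unfolding e by (rule l2norm_add_le(1)[OF a(1) b(1)])
  have "l2norm (resolvent_map f y) \<le> l2norm (\<lambda>n. cnj (phase n) * complex_of_real (gap_rsqrt n) * f n)
      + l2norm (\<lambda>n. - cnj (phase n) * birman_schwinger y n)"
    unfolding e by (rule l2norm_add_le(2)[OF a(1) b(1)])
  thus "l2norm (resolvent_map f y) \<le> sqrt 2 * l2norm f + l2norm y / 2" using a(2) b(2) K(2) by linarith
qed

lemma resolvent_map_contraction:
  assumes "square_summable y1" "square_summable y2"
  shows "l2norm (\<lambda>n. resolvent_map f y1 n - resolvent_map f y2 n) \<le> 1/2 * l2norm (\<lambda>n. y1 n - y2 n)"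
proof -
  note K = birman_schwinger_bound[OF square_summable_diff[OF assms]]
  have "(\<lambda>n. resolvent_map f y1 n - resolvent_map f y2 n)
      = (\<lambda>n. (- cnj (phase n)) * birman_schwinger (\<lambda>n. y1 n - y2 n) n)"
    by (simp add: resolvent_map_def birman_schwinger_diff[OF assms] algebra_simps)
  thus ?thesis using l2norm_mult_bounded(2)[OF K(1), of "\<lambda>n. - cnj (phase n)" 1] K(2)
    by (simp add: norm_phase)
qed

lemma resolvent_map_fixed_iff:
  "resolvent_map f y = y \<longleftrightarrow> (\<forall>n. Sexpr m V (rescale y) n - z * rescale y n = f n)"
proof -
  have "resolvent_map f y n = y n
      \<longleftrightarrow> Sexpr m V (rescale y) n - z * rescale y n = f n" for n
  proof -
    have "Sexpr m V (rescale y) n - z * rescale y n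
        = gap n * (complex_of_real (gap_rsqrt n) * y n) + mult V (rescale y) n"
      by (simp add: Sexpr_def Dpow_eq_symb gap_def rescale_apply algebra_simps)
    thus ?thesis
      unfolding resolvent_map_def birman_schwinger_def rescale_apply
      using unimodular_rescaling_iff[OF cnj_phase_mult[of n] gap_mult_gap_rsqrt[of n]] by simp
  qed
  thus ?thesis by (simp add: fun_eq_iff)
qed

lemma resolvent_solution_exists:
  assumes f: "square_summable f"
  shows "\<exists>u. finite_energy m lam u \<and> (\<forall>n. Sexpr m V u n - z * u n = f n)"
proof -
  obtain y where y: "square_summable y" and fixed: "resolvent_map f y = y"
    using contraction_fixed_point[of "resolvent_map f"] resolvent_map_bound(1)[OF f]
      resolvent_map_contraction by blast
  thus ?thesis
    using gap_rsqrt_mult_energy(1)[OF y] resolvent_map_fixed_iff[of f y] by blast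
qed

lemma norm_gap_le: "cmod (gap n) \<le> (1 + cmod z) * (symb m n + lam)"
proof -
  have "cmod (gap n) \<le> symb m n + cmod z"
    using norm_triangle_ineq4[of "complex_of_real (symb m n)" z] symb_nonneg[of m n] by (simp add: gap_def)
  moreover have "0 \<le> cmod z * symb m n" "cmod z \<le> cmod z * lam"
    using symb_nonneg[of m n] mult_left_mono[of 1 lam "cmod z"] lam_ge_1 by simp_all
  moreover have "(1 + cmod z) * (symb m n + lam) = symb m n + lam + cmod z * symb m n + cmod z * lam"
    by (simp add: algebra_simps)
  ultimately show ?thesis using lam_ge_1 by linarith
qed

lemma sqrt_gap_mult_square_summable:
  assumes u: "finite_energy m lam u"
  shows "square_summable (\<lambda>n. complex_of_real (sqrt (cmod (gap n))) * u n)"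
proof -
  have "(cmod (complex_of_real (sqrt (cmod (gap n))) * u n))^2 \<le> (1 + cmod z) * energy_term m lam u n" for n
  proof -
    have "(cmod (complex_of_real (sqrt (cmod (gap n))) * u n))^2 = cmod (gap n) * (cmod (u n))^2"
      using gap_pos[of n] by (simp add: norm_mult power_mult_distrib)
    also have "\<dots> \<le> (1 + cmod z) * (symb m n + lam) * (cmod (u n))^2"
      by (rule mult_right_mono[OF norm_gap_le]) simp
    finally show ?thesis by (simp add: energy_term_def mult.assoc)
  qed
  thus ?thesis by (rule finite_energy_dominated(1)[OF u]) simp
qed

lemma resolvent_estimate:
  assumes u: "finite_energy m lam u" and f: "square_summable (\<lambda>n. Sexpr m V u n - z * u n)"
  shows "l2norm u \<le> 4 * l2norm (\<lambda>n. Sexpr m V u n - z * u n)"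
proof -
  define f where "f n = Sexpr m V u n - z * u n" for n
  define y where "y n = complex_of_real (sqrt (cmod (gap n))) * u n" for n
  have y: "square_summable y" unfolding y_def by (rule sqrt_gap_mult_square_summable[OF u])
  have u_eq: "rescale y = u"
    using gap_pos by (auto simp: y_def gap_rsqrt_def rescale_apply)
  have "resolvent_map f y = y" using resolvent_map_fixed_iff u_eq by (simp add: f_def)
  hence "l2norm y \<le> sqrt 2 * l2norm f + l2norm y / 2"
    using resolvent_map_bound(2)[OF _ y, of f] f by (simp add: f_def[abs_def])
  hence y_bound: "l2norm y \<le> 2 * sqrt 2 * l2norm f" by simp
  have "l2norm (rescale y) \<le> sqrt 2 * l2norm y"
    unfolding rescale_def
    by (rule l2norm_mult_bounded(2)[OF y]) (use gap_rsqrt_le gap_rsqrt_pos in \<open>simp add: less_imp_le\<close>)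
  also have "\<dots> \<le> sqrt 2 * (2 * sqrt 2 * l2norm f)" by (rule mult_left_mono[OF y_bound]) simp
  also have "\<dots> = 4 * l2norm f" by (simp add: mult.assoc[symmetric])
  finally have "l2norm u \<le> 4 * l2norm f" using u_eq by simp
  thus ?thesis by (simp add: f_def[abs_def])
qed

lemma shifted_operator_in_L2:
  assumes "u \<in> operator_domain pos"
  shows "(\<lambda>n. Sexpr m V u n - z * u n) \<in> L2 pos"
proof -
  have "u \<in> hs pos (real m)" and S: "Sexpr m V u \<in> L2 pos" using assms by simp_all
  hence u: "finite_energy m lam u" "parity_ok pos u" using hs_iff_finite_energy[OF lam_ge_1] by simp_all
  have S': "square_summable (Sexpr m V u)" "parity_ok pos (Sexpr m V u)" using S unfolding mem_L2_iff by simp_all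
  have "square_summable (\<lambda>n. z * u n)"
    using l2norm_mult_bounded(1)[OF finite_energy_l2(1)[OF lam_ge_1 u(1)], of "\<lambda>_. z" "cmod z"] by simp
  hence "square_summable (\<lambda>n. Sexpr m V u n - z * u n)" by (rule square_summable_diff[OF S'(1)])
  moreover have "parity_ok pos (\<lambda>n. Sexpr m V u n - z * u n)"
    by (rule parity_ok_combination(2)[OF S'(2) u(2)])
  ultimately show ?thesis unfolding mem_L2_iff by simp
qed

lemma shifted_operator_inj: "inj_on (\<lambda>u n. Sexpr m V u n - z * u n) (operator_domain pos)"
proof (rule inj_onI)
  fix u1 u2 assume "u1 \<in> operator_domain pos" "u2 \<in> operator_domain pos"
    and eq: "(\<lambda>n. Sexpr m V u1 n - z * u1 n) = (\<lambda>n. Sexpr m V u2 n - z * u2 n)"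
  hence u: "finite_energy m lam u1" "finite_energy m lam u2"
    using hs_iff_finite_energy[OF lam_ge_1] by simp_all
  define w where "w n = u1 n - u2 n" for n
  have w: "finite_energy m lam w" unfolding w_def by (rule finite_energy_diff(1)[OF lam_nonneg u])
  have zero: "Sexpr m V w n - z * w n = 0" for n
    using fun_cong[OF eq, of n] unfolding w_def Sexpr_diff[OF u] by (simp add: algebra_simps)
  have "l2norm w \<le> 4 * l2norm (\<lambda>n. Sexpr m V w n - z * w n)"
    by (rule resolvent_estimate[OF w]) (simp add: zero)
  hence "l2norm w \<le> 0" by (simp add: zero l2norm_def)
  hence "w n = 0" for n by (rule l2norm_le_0_imp_zero[OF finite_energy_l2(1)[OF lam_ge_1 w]])
  thus "u1 = u2" by (simp add: w_def fun_eq_iff)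
qed

lemma shifted_operator_surj: "L2 pos \<subseteq> (\<lambda>u n. Sexpr m V u n - z * u n) ` operator_domain pos"
proof
  fix f assume "f \<in> L2 pos"
  hence f: "square_summable f" "parity_ok pos f" unfolding mem_L2_iff by simp_all
  obtain u where u: "finite_energy m lam u" and eq: "\<And>n. Sexpr m V u n - z * u n = f n"
    using resolvent_solution_exists[OF f(1)] by blast
  define v where "v n = (if even n \<longleftrightarrow> pos then u n else 0)" for n
  have v: "v \<in> hs pos (real m)" and veq: "\<And>n. Sexpr m V v n - z * v n = f n"
    using parity_projection_solves[OF u eq f(2)] unfolding v_def[abs_def] by blast+
  have v': "finite_energy m lam v" "parity_ok pos v"
    using v hs_iff_finite_energy[OF lam_ge_1] by simp_all
  have "square_summable (\<lambda>n. z * v n)"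
    using l2norm_mult_bounded(1)[OF finite_energy_l2(1)[OF lam_ge_1 v'(1)], of "\<lambda>_. z" "cmod z"] by simp
  hence "square_summable (\<lambda>n. f n + z * v n)" by (rule l2norm_add_le(1)[OF f(1)])
  moreover have "parity_ok pos (\<lambda>n. f n + z * v n)"
    by (rule parity_ok_combination(1)[OF f(2) v'(2)])
  moreover have "Sexpr m V v = (\<lambda>n. f n + z * v n)"
    using veq by (simp add: fun_eq_iff algebra_simps)
  ultimately have "v \<in> operator_domain pos" using v unfolding mem_L2_iff by simp
  moreover have "f = (\<lambda>n. Sexpr m V v n - z * v n)" using veq by simp
  ultimately show "f \<in> (\<lambda>u n. Sexpr m V u n - z * u n) ` operator_domain pos" by blast
qed

lemma shifted_operator_bij:
  "bij_betw (\<lambda>u n. Sexpr m V u n - z * u n) (operator_domain pos) (L2 pos)"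
  using shifted_operator_inj shifted_operator_surj shifted_operator_in_L2
  by (intro bij_betw_imageI) blast+

end

context small_potential
begin

lemma resolvent_point_outside_sector:
  assumes "z \<notin> sector (- lam) (pi / 4)"
  shows "resolvent_point m V lam z"
proof unfold_locales
  fix n
  have "0 < symb m n + lam" using symb_nonneg[of m n] lam_ge_1 by linarith
  from le_2_norm_diff_outside_quarter_plane[OF this Re_less_abs_Im_if_not_in_sector[OF assms]]
  show "symb m n + lam \<le> 2 * cmod (complex_of_real (symb m n) - z)" by (simp add: algebra_simps)
qed

lemma m_sectorial_operator: "m_sectorial pos (operator_domain pos) (Sexpr m V)"
proof -
  have numerical_range: "pair (Sexpr m V u) u \<in> sector (- lam) (pi / 4)"
    if "u \<in> operator_domain pos" "l2norm u = 1" for u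
  proof -
    have "finite_energy m lam u" using that(1) hs_iff_finite_energy[OF lam_ge_1] by simp
    thus ?thesis using form_in_sector[OF _ that(2)] pair_Sexpr by simp
  qed
  have resolvent: "bij_betw (\<lambda>u n. Sexpr m V u n - z * u n) (operator_domain pos) (L2 pos)
      \<and> (\<exists>C. \<forall>u\<in>operator_domain pos. l2norm u \<le> C * l2norm (\<lambda>n. Sexpr m V u n - z * u n))"
    if "z \<notin> sector (- lam) (pi / 4)" for z
  proof -
    interpret resolvent_point m V lam z using that by (rule resolvent_point_outside_sector)
    have "l2norm u \<le> 4 * l2norm (\<lambda>n. Sexpr m V u n - z * u n)" if u: "u \<in> operator_domain pos" for u
    proof (rule resolvent_estimate)
      show "finite_energy m lam u" using u hs_iff_finite_energy[OF lam_ge_1] by simp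
      show "square_summable (\<lambda>n. Sexpr m V u n - z * u n)"
        using shifted_operator_in_L2[OF u] unfolding mem_L2_iff by simp
    qed
    thus ?thesis using shifted_operator_bij by blast
  qed
  show ?thesis
    unfolding m_sectorial_def using hs_subset_L2 numerical_range resolvent
    by (intro conjI exI[of _ "- lam"] exI[of _ "pi / 4"]) auto
qed

end

theorem theorem1:
  fixes m :: nat and V :: "int \<Rightarrow> complex" and pos :: bool
  assumes "m \<ge> 1"
    and "V \<in> hs True (- real m)"
  shows "densely_defined pos (hs pos (real m))
    \<and> sectorial_form pos (hs pos (real m)) (\<lambda>u v. pair (Dpow m u) v + pair (mult V u) v)
    \<and> closed_form pos (hs pos (real m)) (\<lambda>u v. pair (Dpow m u) v + pair (mult V u) v)
    \<and> assoc_op pos (hs pos (real m)) (\<lambda>u v. pair (Dpow m u) v + pair (mult V u) v)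
        {u \<in> hs pos (real m). Sexpr m V u \<in> L2 pos} (\<lambda>u. Sexpr m V u)
    \<and> m_sectorial pos {u \<in> hs pos (real m). Sexpr m V u \<in> L2 pos}
        (\<lambda>u. Sexpr m V u)"
proof -
  obtain lam where "1 \<le> lam" and "\<forall>u v G. finite_energy m lam u \<longrightarrow> finite_energy m lam v \<longrightarrow> finite G \<longrightarrow>
      (\<Sum>(n,j)\<in>G. cmod (V (n - j)) * cmod (u j) * cmod (v n))
        \<le> 1/4 * sqrt (energy m lam u) * sqrt (energy m lam v)"
    using potential_form_small[OF assms] by blast
  moreover have "parity_ok True V" using assms(2) by (simp add: hs_def)
  ultimately interpret small_potential m V lam by unfold_locales blast+
  show ?thesis
    using dense_domain sectorial_form closed_form associated_operator m_sectorial_operator by blast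
qed

end
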